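(* Let $A=(a_{ij})\in M_n(\mathbb{C})$ and suppose the Schur map $S_A\colon M_n(\mathbb{C})\to M_n(\mathbb{C})$, $S_A(B)=A\circ B$, is unital, i.e. $S_A(I)=I$. Then the following are equivalent: (i) $S_A$ is multiplicative and $*$-preserving (i.e. $S_A(BC)=S_A(B)S_A(C)$ and $S_A(B^* )=S_A(B)^*$ for all $B,C$); (ii) $S_A$ is a completely positive algebra isomorphism of $M_n(\mathbb{C})$; (iii) $A$ has rank one, is normal, and has all diagonal entries equal to $1$; (iv) $A$ has rank one, all entries of $A$ have modulus $1$, and all diagonal entries equal $1$; (v) $A$ is self-adjoint, $\mathrm{Spec}(A)=\{0,n\}$ with the eigenvalue $0$ of multiplicity $n-1$, and $\|S_A\|=1$; (vi) $A$ has no zero entries, and both $A$ and $A^{[-1]}$ are positive matrices with all diagonal entries equal to $1$.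
   Context: $A\circ B=(a_{ij}b_{ij})$ is the entrywise (Schur) product. A positive matrix means a Hermitian matrix with nonnegative spectrum. For a matrix with no zero entries, $A^{[-1]}=(1/a_{ij})$. $\|S_A\|$ is the operator norm of the linear map $S_A$ when $M_n(\mathbb{C})$ carries the operator norm. A map $\Phi$ on $M_n(\mathbb{C})$ is completely positive if $\mathrm{Id}_{M_k}\otimes\Phi$ is positive for every $k$. $\mathrm{Spec}$ denotes the set of eigenvalues. *)

theory Defs
  imports "Jordan_Normal_Form.Spectral_Radius" "Jordan_Normal_Form.Schur_Decomposition"
          "Jordan_Normal_Form.DL_Rank"
begin

definition schur_prod :: "complex mat \<Rightarrow> complex mat \<Rightarrow> complex mat" where
  "schur_prod A B = mat (dim_row A) (dim_col A) (\<lambda>(i,j). A $$ (i,j) * B $$ (i,j))"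

definition entry_inv :: "complex mat \<Rightarrow> complex mat" where
  "entry_inv A = mat (dim_row A) (dim_col A) (\<lambda>(i,j). 1 / A $$ (i,j))"

definition positive_mat :: "complex mat \<Rightarrow> bool" where
  "positive_mat A \<longleftrightarrow> dim_row A = dim_col A \<and> mat_adjoint A = A \<and>
     (\<forall>z\<in>spectrum A. Im z = 0 \<and> Re z \<ge> 0)"

definition vnorm :: "complex vec \<Rightarrow> real" where
  "vnorm v = sqrt (\<Sum>i<dim_vec v. (cmod (v $ i))\<^sup>2)"

definition op_norm :: "complex mat \<Rightarrow> real" where
  "op_norm M = Sup {vnorm (M *\<^sub>v x) | x. x \<in> carrier_vec (dim_col M) \<and> vnorm x \<le> 1}"

definition schur_map_norm :: "nat \<Rightarrow> complex mat \<Rightarrow> real" where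
  "schur_map_norm n A = Sup {op_norm (schur_prod A B) | B. B \<in> carrier_mat n n \<and> op_norm B \<le> 1}"

definition block_of :: "nat \<Rightarrow> complex mat \<Rightarrow> nat \<Rightarrow> nat \<Rightarrow> complex mat" where
  "block_of n X p q = mat n n (\<lambda>(r,s). X $$ (p*n + r, q*n + s))"

text \<open>Id_{M_k} tensor Phi, acting blockwise on kn x kn matrices.\<close>
definition ampl :: "nat \<Rightarrow> nat \<Rightarrow> (complex mat \<Rightarrow> complex mat) \<Rightarrow> complex mat \<Rightarrow> complex mat" where
  "ampl k n \<Phi> X = mat (k*n) (k*n)
     (\<lambda>(i,j). (\<Phi> (block_of n X (i div n) (j div n))) $$ (i mod n, j mod n))"

definition positive_map_on :: "nat \<Rightarrow> (complex mat \<Rightarrow> complex mat) \<Rightarrow> bool" where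
  "positive_map_on m \<Phi> \<longleftrightarrow> (\<forall>X\<in>carrier_mat m m. positive_mat X \<longrightarrow> positive_mat (\<Phi> X))"

definition completely_positive :: "nat \<Rightarrow> (complex mat \<Rightarrow> complex mat) \<Rightarrow> bool" where
  "completely_positive n \<Phi> \<longleftrightarrow> (\<forall>k. positive_map_on (k*n) (ampl k n \<Phi>))"

definition algebra_iso :: "nat \<Rightarrow> (complex mat \<Rightarrow> complex mat) \<Rightarrow> bool" where
  "algebra_iso n \<Phi> \<longleftrightarrow> bij_betw \<Phi> (carrier_mat n n) (carrier_mat n n) \<and>
     (\<forall>B\<in>carrier_mat n n. \<forall>C\<in>carrier_mat n n.
        \<Phi> (B + C) = \<Phi> B + \<Phi> C \<and> \<Phi> (B * C) = \<Phi> B * \<Phi> C) \<and>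
     (\<forall>c. \<forall>B\<in>carrier_mat n n. \<Phi> (c \<cdot>\<^sub>m B) = c \<cdot>\<^sub>m \<Phi> B)"

end

theory Submission
  imports Defs "Jordan_Normal_Form.Jordan_Normal_Form_Uniqueness"
begin

text \<open>Every condition is equivalent to \<open>a\<^sub>i\<^sub>j = d\<^sub>i conj(d\<^sub>j)\<close> with \<open>|d\<^sub>i| = 1\<close>, i.e. \<open>A = D J D\<^sup>*\<close> for a
  diagonal unitary \<open>D\<close> and the all-ones matrix \<open>J\<close>. For such \<open>A\<close> the Schur map is the unitary
  conjugation \<open>B \<mapsto> D B D\<^sup>*\<close>, hence multiplicative, \<open>*\<close>-preserving, completely positive, bijective
  and isometric, and \<open>A\<close> is \<open>n\<close> times a rank-one projection. Conversely, multiplicativity on matrix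
  units, rank one, and the equation \<open>A\<^sup>2 = n A\<close> forced by \<open>Spec A \<subseteq> {0, n}\<close> each yield the
  cocycle identity \<open>a\<^sub>i\<^sub>j a\<^sub>j\<^sub>k = a\<^sub>i\<^sub>k\<close>, which together with \<open>a\<^sub>i\<^sub>i = 1\<close> and hermiticity gives the dyad
  form. For (vi), a positive matrix with unit diagonal satisfies \<open>\<Sum>|a\<^sub>i\<^sub>j|\<^sup>2 \<le> n\<^sup>2\<close>, with equality only
  if its spectrum lies in \<open>{0, n}\<close>; applied to \<open>A\<close> and \<open>A\<^bsup>[-1]\<^esup>\<close>, AM-GM forces equality.\<close>

lemma index_mult_mat_sum:
  assumes "A \<in> carrier_mat n m" "B \<in> carrier_mat m p" "i < n" "j < p"
  shows "(A * B) $$ (i,j) = (\<Sum>k<m. A $$ (i,k) * B $$ (k,j))"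
  using assms by (auto simp: scalar_prod_def intro!: sum.cong)

lemma index_mult_mat_vec_sum:
  assumes "A \<in> carrier_mat n m" "v \<in> carrier_vec m" "i < n"
  shows "(A *\<^sub>v v) $ i = (\<Sum>k<m. A $$ (i,k) * v $ k)"
  using assms by (auto simp: scalar_prod_def intro!: sum.cong)

lemma mat_adjoint_carrier: "A \<in> carrier_mat n m \<Longrightarrow> mat_adjoint A \<in> carrier_mat m n"
  by (auto simp: mat_adjoint_def)

lemma index_mat_adjoint:
  "A \<in> carrier_mat n m \<Longrightarrow> i < m \<Longrightarrow> j < n \<Longrightarrow> mat_adjoint A $$ (i,j) = cnj (A $$ (j,i))"
  by (auto simp: mat_adjoint_def mat_of_rows_def)

lemma hermitian_entry:
  assumes "A \<in> carrier_mat n n" "mat_adjoint A = A" "i < n" "j < n"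
  shows "A $$ (j,i) = cnj (A $$ (i,j))"
  using index_mat_adjoint[OF assms(1) assms(4) assms(3)] assms(2) by simp

lemma hermitianI:
  assumes A: "A \<in> carrier_mat n n"
    and entry: "\<And>i j. i < n \<Longrightarrow> j < n \<Longrightarrow> A $$ (j,i) = cnj (A $$ (i,j))"
  shows "mat_adjoint A = A"
proof (rule eq_matI)
  fix i j assume "i < dim_row A" "j < dim_col A"
  then show "mat_adjoint A $$ (i,j) = A $$ (i,j)"
    using A entry[of j i] by (simp add: index_mat_adjoint)
qed (use A mat_adjoint_carrier[OF A] in auto)

lemma schur_prod_carrier: "A \<in> carrier_mat n m \<Longrightarrow> schur_prod A B \<in> carrier_mat n m"
  by (auto simp: schur_prod_def)

lemma index_schur_prod:
  "A \<in> carrier_mat n m \<Longrightarrow> i < n \<Longrightarrow> j < m \<Longrightarrow> schur_prod A B $$ (i,j) = A $$ (i,j) * B $$ (i,j)"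
  by (auto simp: schur_prod_def)

lemma diag_eq_1_if_schur_prod_unital:
  assumes A: "A \<in> carrier_mat n n" and unital: "schur_prod A (1\<^sub>m n) = 1\<^sub>m n" and i: "i < n"
  shows "A $$ (i,i) = 1"
  using arg_cong[OF unital, of "\<lambda>M. M $$ (i,i)"] A i by (simp add: index_schur_prod)

lemma cnj_mult_self_eq_1: "cmod z = 1 \<Longrightarrow> cnj z * z = 1"
  by (metis complex_norm_square mult.commute of_real_1 power_one)

lemma cmod_eq_1_if_mult_cnj_eq_1: "z * cnj z = 1 \<Longrightarrow> cmod z = 1"
proof -
  assume "z * cnj z = 1"
  then have "(cmod z)\<^sup>2 = 1" using complex_norm_square[of z] of_real_eq_1_iff by metis
  then show ?thesis using norm_ge_zero[of z] by (auto simp: power2_eq_1_iff)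
qed

lemma sum_cnj_mult_self: "(\<Sum>j\<in>S. cnj (f j) * f j) = complex_of_real (\<Sum>j\<in>S. (cmod (f j))\<^sup>2)"
  unfolding of_real_sum
proof (rule sum.cong)
  fix j show "cnj (f j) * f j = complex_of_real ((cmod (f j))\<^sup>2)"
    by (subst complex_norm_square) (rule mult.commute)
qed simp

section \<open>Unimodular dyads\<close>

definition cocycle_mat :: "nat \<Rightarrow> complex mat \<Rightarrow> bool" where
  "cocycle_mat n A \<longleftrightarrow> (\<forall>i<n. \<forall>j<n. \<forall>k<n. A $$ (i,j) * A $$ (j,k) = A $$ (i,k))"

text \<open>\<open>A = D J D\<^sup>*\<close> with \<open>J\<close> the all-ones matrix and \<open>D\<close> a diagonal unitary. Each condition of the
  theorem is shown equivalent to this one.\<close>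
definition unimodular_dyad :: "nat \<Rightarrow> complex mat \<Rightarrow> bool" where
  "unimodular_dyad n A \<longleftrightarrow>
     (\<exists>d. (\<forall>i<n. cmod (d i) = 1) \<and> (\<forall>i<n. \<forall>j<n. A $$ (i,j) = d i * cnj (d j)))"

lemma unimodular_dyadE:
  assumes "unimodular_dyad n A"
  obtains d where "\<forall>i<n. cmod (d i) = 1" "\<forall>i<n. \<forall>j<n. A $$ (i,j) = d i * cnj (d j)"
  using assms unfolding unimodular_dyad_def by blast

lemma unimodular_dyadI:
  assumes A: "A \<in> carrier_mat n n" and n: "n \<ge> 1" and diag: "\<forall>i<n. A $$ (i,i) = 1"
    and H: "mat_adjoint A = A" and cocycle: "cocycle_mat n A"
  shows "unimodular_dyad n A"
  unfolding unimodular_dyad_def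
proof (intro exI[of _ "\<lambda>i. A $$ (i,0)"] conjI allI impI)
  have 0: "0 < n" using n by simp
  fix i assume i: "i < n"
  have "A $$ (i,0) * cnj (A $$ (i,0)) = A $$ (i,0) * A $$ (0,i)"
    using hermitian_entry[OF A H 0 i] by simp
  also have "\<dots> = 1" using cocycle i 0 diag by (auto simp: cocycle_mat_def)
  finally show "cmod (A $$ (i,0)) = 1" by (rule cmod_eq_1_if_mult_cnj_eq_1)
  fix j assume j: "j < n"
  have "A $$ (i,j) = A $$ (i,0) * A $$ (0,j)" using cocycle i j 0 by (auto simp: cocycle_mat_def)
  then show "A $$ (i,j) = A $$ (i,0) * cnj (A $$ (j,0))" using hermitian_entry[OF A H j 0] by simp
qed

lemma unimodular_dyadD:
  assumes A: "A \<in> carrier_mat n n" and P: "unimodular_dyad n A"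
  shows "mat_adjoint A = A" "\<forall>i<n. A $$ (i,i) = 1" "cocycle_mat n A"
    "\<forall>i<n. \<forall>j<n. cmod (A $$ (i,j)) = 1"
proof -
  obtain d where d1: "\<forall>i<n. cmod (d i) = 1" and d: "\<forall>i<n. \<forall>j<n. A $$ (i,j) = d i * cnj (d j)"
    using unimodular_dyadE[OF P] by blast
  have c: "cnj (d i) * d i = 1" if "i < n" for i using cnj_mult_self_eq_1 d1 that by auto
  show "mat_adjoint A = A" by (rule hermitianI[OF A]) (simp add: d)
  show "\<forall>i<n. A $$ (i,i) = 1" using c d by (simp add: mult.commute)
  show "cocycle_mat n A"
    unfolding cocycle_mat_def
  proof (intro allI impI)
    fix i j k assume ijk: "i < n" "j < n" "k < n"
    have "A $$ (i,j) * A $$ (j,k) = d i * (cnj (d j) * d j) * cnj (d k)"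
      using d ijk by (simp add: mult.assoc)
    then show "A $$ (i,j) * A $$ (j,k) = A $$ (i,k)" using c d ijk by simp
  qed
  show "\<forall>i<n. \<forall>j<n. cmod (A $$ (i,j)) = 1" using d d1 by (simp add: norm_mult)
qed

section \<open>Multiplicative and completely positive Schur maps\<close>

definition matrix_unit :: "nat \<Rightarrow> nat \<Rightarrow> nat \<Rightarrow> complex mat" where
  "matrix_unit n i j = mat n n (\<lambda>(r,s). if r = i \<and> s = j then 1 else 0)"

definition ones_mat :: "nat \<Rightarrow> complex mat" where
  "ones_mat n = mat n n (\<lambda>_. 1)"

lemma matrix_unit_carrier [simp]: "matrix_unit n i j \<in> carrier_mat n n"
  by (simp add: matrix_unit_def)

lemma ones_mat_carrier [simp]: "ones_mat n \<in> carrier_mat n n"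
  by (simp add: ones_mat_def)

lemma schur_prod_ones_mat: "A \<in> carrier_mat n n \<Longrightarrow> schur_prod A (ones_mat n) = A"
  by (rule eq_matI) (auto simp: schur_prod_def ones_mat_def)

lemma mat_adjoint_ones_mat: "mat_adjoint (ones_mat n) = ones_mat n"
  by (rule hermitianI[of _ n]) (auto simp: ones_mat_def)

lemma unimodular_dyad_ones_mat: "unimodular_dyad n (ones_mat n)"
  unfolding unimodular_dyad_def by (intro exI[of _ "\<lambda>_. 1"]) (auto simp: ones_mat_def)

text \<open>Evaluate \<open>S\<^sub>A(E\<^sub>i\<^sub>j E\<^sub>j\<^sub>k) = S\<^sub>A(E\<^sub>i\<^sub>j) S\<^sub>A(E\<^sub>j\<^sub>k)\<close> at the entry \<open>(i,k)\<close>.\<close>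
lemma cocycle_if_schur_prod_mult:
  assumes A: "A \<in> carrier_mat n n"
    and mult: "\<And>B C. B \<in> carrier_mat n n \<Longrightarrow> C \<in> carrier_mat n n \<Longrightarrow>
      schur_prod A (B * C) = schur_prod A B * schur_prod A C"
  shows "cocycle_mat n A"
  unfolding cocycle_mat_def
proof (intro allI impI)
  fix i j k assume i: "i < n" and j: "j < n" and k: "k < n"
  let ?E = "matrix_unit n"
  have "schur_prod A (?E i j * ?E j k) $$ (i,k) = A $$ (i,k) * (\<Sum>l<n. ?E i j $$ (i,l) * ?E j k $$ (l,k))"
    using A i k by (simp add: index_schur_prod index_mult_mat_sum[of _ n n _ n])
  also have "(\<Sum>l<n. ?E i j $$ (i,l) * ?E j k $$ (l,k)) = (\<Sum>l<n. if l = j then 1 else 0)"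
    using i k by (intro sum.cong) (auto simp: matrix_unit_def)
  finally have lhs: "schur_prod A (?E i j * ?E j k) $$ (i,k) = A $$ (i,k)" using j by simp
  have "(schur_prod A (?E i j) * schur_prod A (?E j k)) $$ (i,k)
      = (\<Sum>l<n. schur_prod A (?E i j) $$ (i,l) * schur_prod A (?E j k) $$ (l,k))"
    using A i k by (intro index_mult_mat_sum) (auto intro: schur_prod_carrier)
  also have "\<dots> = (\<Sum>l<n. if l = j then A $$ (i,j) * A $$ (j,k) else 0)"
    using A i k by (intro sum.cong) (auto simp: matrix_unit_def index_schur_prod)
  finally have rhs: "(schur_prod A (?E i j) * schur_prod A (?E j k)) $$ (i,k) = A $$ (i,j) * A $$ (j,k)"
    using j by simp
  show "A $$ (i,j) * A $$ (j,k) = A $$ (i,k)" using lhs rhs mult[of "?E i j" "?E j k"] by simp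
qed

lemma schur_prod_mult_if_cocycle:
  assumes A: "A \<in> carrier_mat n n" and cocycle: "cocycle_mat n A"
    and B: "B \<in> carrier_mat n n" and C: "C \<in> carrier_mat n n"
  shows "schur_prod A (B * C) = schur_prod A B * schur_prod A C"
proof (rule eq_matI)
  fix i k assume "i < dim_row (schur_prod A B * schur_prod A C)" "k < dim_col (schur_prod A B * schur_prod A C)"
  then have i: "i < n" and k: "k < n" using A by (auto simp: schur_prod_def)
  have "schur_prod A (B * C) $$ (i,k) = A $$ (i,k) * (\<Sum>j<n. B $$ (i,j) * C $$ (j,k))"
    using A B C i k by (simp add: index_schur_prod index_mult_mat_sum[OF B C i k] del: index_mult_mat)
  also have "\<dots> = (\<Sum>j<n. (A $$ (i,j) * B $$ (i,j)) * (A $$ (j,k) * C $$ (j,k)))"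
    unfolding sum_distrib_left
  proof (rule sum.cong)
    fix j assume "j \<in> {..<n}"
    then have "A $$ (i,k) = A $$ (i,j) * A $$ (j,k)" using cocycle i k by (simp add: cocycle_mat_def)
    then show "A $$ (i,k) * (B $$ (i,j) * C $$ (j,k)) = (A $$ (i,j) * B $$ (i,j)) * (A $$ (j,k) * C $$ (j,k))"
      by (simp add: ac_simps)
  qed simp
  also have "\<dots> = (schur_prod A B * schur_prod A C) $$ (i,k)"
    using A B C i k
    by (subst index_mult_mat_sum[of _ n n _ n]) (auto intro: schur_prod_carrier intro!: sum.cong simp: index_schur_prod)
  finally show "schur_prod A (B * C) $$ (i,k) = (schur_prod A B * schur_prod A C) $$ (i,k)" .
qed (use A in \<open>auto simp: schur_prod_def\<close>)

lemma schur_prod_mat_adjoint_if_hermitian: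
  assumes A: "A \<in> carrier_mat n n" and H: "mat_adjoint A = A" and B: "B \<in> carrier_mat n n"
  shows "schur_prod A (mat_adjoint B) = mat_adjoint (schur_prod A B)"
proof (rule eq_matI)
  have SB: "schur_prod A B \<in> carrier_mat n n" using A by (rule schur_prod_carrier)
  fix i j assume "i < dim_row (mat_adjoint (schur_prod A B))" "j < dim_col (mat_adjoint (schur_prod A B))"
  then have i: "i < n" and j: "j < n" using mat_adjoint_carrier[OF SB] by auto
  have "schur_prod A (mat_adjoint B) $$ (i,j) = A $$ (i,j) * cnj (B $$ (j,i))"
    using A B i j by (simp add: index_schur_prod index_mat_adjoint)
  also have "\<dots> = cnj (A $$ (j,i) * B $$ (j,i))" using hermitian_entry[OF A H i j] by simp
  also have "\<dots> = mat_adjoint (schur_prod A B) $$ (i,j)"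
    using A SB i j by (simp add: index_schur_prod index_mat_adjoint)
  finally show "schur_prod A (mat_adjoint B) $$ (i,j) = mat_adjoint (schur_prod A B) $$ (i,j)" .
qed (use A mat_adjoint_carrier[OF schur_prod_carrier[OF A, of B]] in \<open>auto simp: schur_prod_def\<close>)

lemma star_hom_iff_unimodular_dyad:
  assumes A: "A \<in> carrier_mat n n" and n: "n \<ge> 1" and diag: "\<forall>i<n. A $$ (i,i) = 1"
  shows "((\<forall>B\<in>carrier_mat n n. \<forall>C\<in>carrier_mat n n. schur_prod A (B * C) = schur_prod A B * schur_prod A C) \<and>
      (\<forall>B\<in>carrier_mat n n. schur_prod A (mat_adjoint B) = mat_adjoint (schur_prod A B)))
    \<longleftrightarrow> unimodular_dyad n A"
proof
  assume hom: "(\<forall>B\<in>carrier_mat n n. \<forall>C\<in>carrier_mat n n. schur_prod A (B * C) = schur_prod A B * schur_prod A C) \<and>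
      (\<forall>B\<in>carrier_mat n n. schur_prod A (mat_adjoint B) = mat_adjoint (schur_prod A B))"
  then have "mat_adjoint A = A"
    using ones_mat_carrier[of n] by (metis schur_prod_ones_mat[OF A] mat_adjoint_ones_mat)
  moreover have "cocycle_mat n A" using hom by (intro cocycle_if_schur_prod_mult[OF A]) blast
  ultimately show "unimodular_dyad n A" using unimodular_dyadI[OF A n diag] by blast
next
  assume "unimodular_dyad n A"
  then show "(\<forall>B\<in>carrier_mat n n. \<forall>C\<in>carrier_mat n n. schur_prod A (B * C) = schur_prod A B * schur_prod A C) \<and>
      (\<forall>B\<in>carrier_mat n n. schur_prod A (mat_adjoint B) = mat_adjoint (schur_prod A B))"
    using unimodular_dyadD[OF A] schur_prod_mult_if_cocycle[OF A] schur_prod_mat_adjoint_if_hermitian[OF A]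
    by blast
qed

lemma vec_nonzero_entry:
  assumes "v \<in> carrier_vec n" "v \<noteq> 0\<^sub>v n"
  obtains i where "i < n" "v $ i \<noteq> 0"
  using assms by (metis carrier_vecD eq_vecI index_zero_vec)

lemma spectrumE:
  assumes "z \<in> spectrum M" "M \<in> carrier_mat n n"
  obtains v where "v \<in> carrier_vec n" "v \<noteq> 0\<^sub>v n" "M *\<^sub>v v = z \<cdot>\<^sub>v v"
  using assms unfolding spectrum_def eigenvalue_def eigenvector_def by auto

lemma spectrumI:
  assumes "M \<in> carrier_mat n n" "v \<in> carrier_vec n" "v \<noteq> 0\<^sub>v n" "M *\<^sub>v v = z \<cdot>\<^sub>v v"
  shows "z \<in> spectrum M"
  using assms unfolding spectrum_def eigenvalue_def eigenvector_def by auto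

lemma schur_prod_dyad_mult_vec:
  assumes A: "A \<in> carrier_mat n n" and d: "\<forall>i<n. \<forall>j<n. A $$ (i,j) = d i * cnj (d j)"
    and B: "B \<in> carrier_mat n n" and v: "v \<in> carrier_vec n"
  shows "schur_prod A B *\<^sub>v v = vec n (\<lambda>i. d i * (B *\<^sub>v vec n (\<lambda>j. cnj (d j) * v $ j)) $ i)"
proof (rule eq_vecI)
  have S: "schur_prod A B \<in> carrier_mat n n" using A by (rule schur_prod_carrier)
  fix i assume "i < dim_vec (vec n (\<lambda>i. d i * (B *\<^sub>v vec n (\<lambda>j. cnj (d j) * v $ j)) $ i))"
  then have i: "i < n" by simp
  show "(schur_prod A B *\<^sub>v v) $ i = vec n (\<lambda>i. d i * (B *\<^sub>v vec n (\<lambda>j. cnj (d j) * v $ j)) $ i) $ i"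
    using index_mult_mat_vec_sum[OF S v i] index_mult_mat_vec_sum[OF B _ i, of "vec n (\<lambda>j. cnj (d j) * v $ j)"]
      i d A by (auto intro!: sum.cong simp: sum_distrib_left index_schur_prod ac_simps)
qed (use A in \<open>auto simp: schur_prod_def\<close>)

text \<open>\<open>A v = (d\<^sup>* v) d\<close>, so an eigenvalue with eigenvector orthogonal to \<open>d\<close> is \<open>0\<close>, and otherwise
  it is \<open>d\<^sup>* d = n\<close>.\<close>
lemma spectrum_unimodular_dyad:
  assumes A: "A \<in> carrier_mat n n" and P: "unimodular_dyad n A"
  shows "spectrum A \<subseteq> {0, of_nat n}"
proof
  fix z assume z: "z \<in> spectrum A"
  obtain d where d1: "\<forall>i<n. cmod (d i) = 1" and d: "\<forall>i<n. \<forall>j<n. A $$ (i,j) = d i * cnj (d j)"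
    using unimodular_dyadE[OF P] by blast
  obtain v where v: "v \<in> carrier_vec n" and v0: "v \<noteq> 0\<^sub>v n" and ev: "A *\<^sub>v v = z \<cdot>\<^sub>v v"
    using spectrumE[OF z A] by blast
  define s where "s = (\<Sum>j<n. cnj (d j) * v $ j)"
  have zv: "z * v $ i = d i * s" if i: "i < n" for i
  proof -
    have "(A *\<^sub>v v) $ i = d i * s"
      using index_mult_mat_vec_sum[OF A v i] d i unfolding s_def sum_distrib_left
      by (auto intro!: sum.cong simp: ac_simps)
    then show ?thesis using ev v i by (metis carrier_vecD index_smult_vec(1))
  qed
  have "z * s = (\<Sum>i<n. cnj (d i) * (z * v $ i))"
    unfolding s_def sum_distrib_left by (auto intro!: sum.cong simp: ac_simps)
  also have "\<dots> = of_nat n * s"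
    using zv d1 cnj_mult_self_eq_1 by (simp add: mult.assoc[symmetric])
  finally have zs: "z * s = of_nat n * s" .
  show "z \<in> {0, of_nat n}"
  proof (cases "s = 0")
    case True
    obtain i where i: "i < n" "v $ i \<noteq> 0" using vec_nonzero_entry[OF v v0] by blast
    have "z * v $ i = 0" using zv[OF i(1)] True by simp
    then show ?thesis using i by simp
  qed (use zs in simp)
qed

lemma positive_mat_unimodular_dyad:
  assumes A: "A \<in> carrier_mat n n" and P: "unimodular_dyad n A"
  shows "positive_mat A"
  unfolding positive_mat_def
  using A unimodular_dyadD(1)[OF A P] spectrum_unimodular_dyad[OF A P] by auto

text \<open>\<open>S\<^sub>A(X) = D X D\<^sup>*\<close> is a unitary conjugation, so it preserves the spectrum.\<close>
lemma positive_mat_schur_prod_unimodular_dyad: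
  assumes A: "A \<in> carrier_mat n n" and P: "unimodular_dyad n A"
    and X: "X \<in> carrier_mat n n" and pos: "positive_mat X"
  shows "positive_mat (schur_prod A X)"
proof -
  obtain d where d1: "\<forall>i<n. cmod (d i) = 1" and d: "\<forall>i<n. \<forall>j<n. A $$ (i,j) = d i * cnj (d j)"
    using unimodular_dyadE[OF P] by blast
  have c: "cnj (d i) * d i = 1" if "i < n" for i using cnj_mult_self_eq_1 d1 that by auto
  have XH: "mat_adjoint X = X" using pos unfolding positive_mat_def by auto
  have AH: "mat_adjoint A = A" using unimodular_dyadD(1)[OF A P] .
  have S: "schur_prod A X \<in> carrier_mat n n" using A by (rule schur_prod_carrier)
  have H: "mat_adjoint (schur_prod A X) = schur_prod A X"
  proof (rule hermitianI[OF S])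
    fix i j assume "i < n" "j < n"
    then show "schur_prod A X $$ (j,i) = cnj (schur_prod A X $$ (i,j))"
      using A hermitian_entry[OF A AH, of i j] hermitian_entry[OF X XH, of i j] by (simp add: index_schur_prod)
  qed
  have "z \<in> spectrum X" if z: "z \<in> spectrum (schur_prod A X)" for z
  proof -
    obtain v where v: "v \<in> carrier_vec n" and v0: "v \<noteq> 0\<^sub>v n" and ev: "schur_prod A X *\<^sub>v v = z \<cdot>\<^sub>v v"
      using spectrumE[OF z S] by blast
    define w where "w = vec n (\<lambda>i. cnj (d i) * v $ i)"
    have w: "w \<in> carrier_vec n" unfolding w_def by simp
    have Sv: "schur_prod A X *\<^sub>v v = vec n (\<lambda>i. d i * (X *\<^sub>v w) $ i)"
      unfolding w_def by (rule schur_prod_dyad_mult_vec[OF A d X v])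
    have "X *\<^sub>v w = z \<cdot>\<^sub>v w"
    proof (rule eq_vecI)
      fix i assume "i < dim_vec (z \<cdot>\<^sub>v w)"
      then have i: "i < n" using w by auto
      have "d i * (X *\<^sub>v w) $ i = z * v $ i" using arg_cong[OF Sv, of "\<lambda>u. u $ i"] ev v i by simp
      then have "cnj (d i) * (d i * (X *\<^sub>v w) $ i) = cnj (d i) * (z * v $ i)" by simp
      then show "(X *\<^sub>v w) $ i = (z \<cdot>\<^sub>v w) $ i"
        using c[OF i] i w unfolding w_def by (simp add: mult.assoc[symmetric] mult.left_commute)
    qed (use X w in auto)
    moreover have "w \<noteq> 0\<^sub>v n"
    proof
      assume "w = 0\<^sub>v n"
      obtain i where i: "i < n" "v $ i \<noteq> 0" using vec_nonzero_entry[OF v v0] by blast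
      have "cnj (d i) * v $ i = 0" using \<open>w = 0\<^sub>v n\<close> i unfolding w_def by (metis index_vec index_zero_vec(1))
      moreover have "cnj (d i) \<noteq> 0" using d1 i by auto
      ultimately show False using i by simp
    qed
    ultimately show ?thesis using spectrumI[OF X w] by blast
  qed
  then show ?thesis using pos H S unfolding positive_mat_def by auto
qed

text \<open>\<open>J\<^sub>k \<otimes> A\<close>, the Schur multiplier of \<open>Id\<^sub>M\<^sub>k \<otimes> S\<^sub>A\<close>.\<close>
definition tile_mat :: "nat \<Rightarrow> nat \<Rightarrow> complex mat \<Rightarrow> complex mat" where
  "tile_mat k n A = mat (k*n) (k*n) (\<lambda>(i,j). A $$ (i mod n, j mod n))"

lemma ampl_schur_prod:
  assumes n: "n \<ge> 1" and A: "A \<in> carrier_mat n n" and X: "X \<in> carrier_mat (k*n) (k*n)"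
  shows "ampl k n (schur_prod A) X = schur_prod (tile_mat k n A) X"
proof (rule eq_matI)
  fix i j assume "i < dim_row (schur_prod (tile_mat k n A) X)" "j < dim_col (schur_prod (tile_mat k n A) X)"
  then have i: "i < k*n" and j: "j < k*n" by (auto simp: schur_prod_def tile_mat_def)
  have "i mod n < n" "j mod n < n" using n by auto
  then have "ampl k n (schur_prod A) X $$ (i,j)
      = A $$ (i mod n, j mod n) * X $$ (i div n * n + i mod n, j div n * n + j mod n)"
    using A i j by (simp add: ampl_def index_schur_prod block_of_def)
  then show "ampl k n (schur_prod A) X $$ (i,j) = schur_prod (tile_mat k n A) X $$ (i,j)"
    using i j by (simp add: schur_prod_def tile_mat_def)
qed (auto simp: ampl_def schur_prod_def tile_mat_def)

lemma unimodular_dyad_tile_mat: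
  assumes n: "n \<ge> 1" and P: "unimodular_dyad n A"
  shows "unimodular_dyad (k*n) (tile_mat k n A)"
proof -
  obtain d where "\<forall>i<n. cmod (d i) = 1" "\<forall>i<n. \<forall>j<n. A $$ (i,j) = d i * cnj (d j)"
    using unimodular_dyadE[OF P] by blast
  moreover have "i mod n < n" for i using n by simp
  ultimately show ?thesis
    unfolding unimodular_dyad_def tile_mat_def by (intro exI[of _ "\<lambda>i. d (i mod n)"]) auto
qed

lemma completely_positive_schur_prod_unimodular_dyad:
  assumes n: "n \<ge> 1" and A: "A \<in> carrier_mat n n" and P: "unimodular_dyad n A"
  shows "completely_positive n (schur_prod A)"
  unfolding completely_positive_def positive_map_on_def
proof (intro allI ballI impI)
  fix k X assume X: "X \<in> carrier_mat (k*n) (k*n)" and pos: "positive_mat X"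
  have "tile_mat k n A \<in> carrier_mat (k*n) (k*n)" by (simp add: tile_mat_def)
  then show "positive_mat (ampl k n (schur_prod A) X)"
    unfolding ampl_schur_prod[OF n A X]
    using positive_mat_schur_prod_unimodular_dyad unimodular_dyad_tile_mat[OF n P] X pos by blast
qed

lemma algebra_iso_schur_prod_unimodular_dyad:
  assumes A: "A \<in> carrier_mat n n" and P: "unimodular_dyad n A"
  shows "algebra_iso n (schur_prod A)"
proof -
  note A_props = unimodular_dyadD[OF A P]
  define A' where "A' = mat n n (\<lambda>(i,j). cnj (A $$ (i,j)))"
  have A': "A' \<in> carrier_mat n n" unfolding A'_def by simp
  have c: "cnj (A $$ (i,j)) * A $$ (i,j) = 1" if "i < n" "j < n" for i j
    using cnj_mult_self_eq_1 A_props(4) that by auto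
  have inverse: "schur_prod A' (schur_prod A B) = B" "schur_prod A (schur_prod A' B) = B"
    if B: "B \<in> carrier_mat n n" for B
    using A A' B c by (auto intro!: eq_matI simp: schur_prod_def A'_def mult.assoc[symmetric])
      (simp add: mult.commute)
  have "bij_betw (schur_prod A) (carrier_mat n n) (carrier_mat n n)"
    by (rule bij_betwI[of _ _ _ "schur_prod A'"]) (use inverse A A' in \<open>auto intro: schur_prod_carrier\<close>)
  moreover have "schur_prod A (B + C) = schur_prod A B + schur_prod A C"
    if "B \<in> carrier_mat n n" "C \<in> carrier_mat n n" for B C
    using A that by (auto intro!: eq_matI simp: schur_prod_def ring_distribs)
  moreover have "schur_prod A (c \<cdot>\<^sub>m B) = c \<cdot>\<^sub>m schur_prod A B" if "B \<in> carrier_mat n n" for B c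
    using A that by (auto intro!: eq_matI simp: schur_prod_def ac_simps)
  ultimately show ?thesis
    unfolding algebra_iso_def using schur_prod_mult_if_cocycle[OF A A_props(3)] by auto
qed

lemma cp_algebra_iso_iff_unimodular_dyad:
  assumes A: "A \<in> carrier_mat n n" and n: "n \<ge> 1" and diag: "\<forall>i<n. A $$ (i,i) = 1"
  shows "(completely_positive n (schur_prod A) \<and> algebra_iso n (schur_prod A)) \<longleftrightarrow> unimodular_dyad n A"
proof
  assume cp_iso: "completely_positive n (schur_prod A) \<and> algebra_iso n (schur_prod A)"
  then have "cocycle_mat n A"
    by (intro cocycle_if_schur_prod_mult[OF A]) (auto simp: algebra_iso_def)
  moreover
  have J: "ones_mat n \<in> carrier_mat (1*n) (1*n)" by simp
  have "positive_map_on (1*n) (ampl 1 n (schur_prod A))"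
    using cp_iso unfolding completely_positive_def by blast
  then have "positive_mat (ampl 1 n (schur_prod A) (ones_mat n))"
    using J positive_mat_unimodular_dyad[OF _ unimodular_dyad_ones_mat] unfolding positive_map_on_def by auto
  moreover have "ampl 1 n (schur_prod A) (ones_mat n) = A"
    unfolding ampl_schur_prod[OF n A J]
    by (rule eq_matI) (use A in \<open>auto simp: schur_prod_def ones_mat_def tile_mat_def\<close>)
  ultimately show "unimodular_dyad n A"
    using unimodular_dyadI[OF A n diag] unfolding positive_mat_def by auto
qed (use completely_positive_schur_prod_unimodular_dyad[OF n A] algebra_iso_schur_prod_unimodular_dyad[OF A]
     in blast)

section \<open>Rank one\<close>

lemma rank_ge_length_if_cols_independent:
  fixes A :: "complex mat"
  assumes A: "A \<in> carrier_mat n n" and ws: "set ws \<subseteq> set (cols A)" and dist: "distinct ws"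
    and indep: "\<And>v. v \<in> carrier_vec (length ws) \<Longrightarrow> mat_of_cols n ws *\<^sub>v v = 0\<^sub>v n \<Longrightarrow> v = 0\<^sub>v (length ws)"
  shows "vec_space.rank n A \<ge> length ws"
proof -
  interpret vec_space "TYPE(complex)" n .
  have "set ws \<subseteq> carrier_vec n" using ws A cols_dim by blast
  then have cM: "cols (mat_of_cols n ws) = ws" by simp
  have "\<not> lin_dep (set ws)"
  proof
    assume "lin_dep (set ws)"
    then obtain v where "v \<in> carrier_vec (length ws)" "v \<noteq> 0\<^sub>v (length ws)" "mat_of_cols n ws *\<^sub>v v = 0\<^sub>v n"
      using lin_depE[OF mat_of_cols_carrier(1)[of n ws]] dist cM by metis
    then show False using indep by blast
  qed
  then have "rank A \<ge> card (set ws)" by (rule rank_ge_card_indpt[OF A ws])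
  then show ?thesis using distinct_card[OF dist] by simp
qed

lemma rank_eq_1_if_cocycle:
  fixes A :: "complex mat"
  assumes A: "A \<in> carrier_mat n n" and n: "n \<ge> 1" and diag: "\<forall>i<n. A $$ (i,i) = 1"
    and cocycle: "cocycle_mat n A"
  shows "vec_space.rank n A = 1"
proof -
  have 0: "0 < n" using n by auto
  have "vec_space.rank n A \<le> 1"
    by (rule vec_space.rank_le_1_product_entries[OF A, of "\<lambda>r. A $$ (r,0)" "\<lambda>c. A $$ (0,c)"])
      (use A cocycle 0 in \<open>auto simp: cocycle_mat_def\<close>)
  moreover have "vec_space.rank n A \<ge> length [col A 0]"
  proof (rule rank_ge_length_if_cols_independent[OF A])
    fix v :: "complex vec" assume v: "v \<in> carrier_vec (length [col A 0])"
      and Mv: "mat_of_cols n [col A 0] *\<^sub>v v = 0\<^sub>v n"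
    have "(mat_of_cols n [col A 0] *\<^sub>v v) $ 0 = A $$ (0,0) * v $ 0"
      using index_mult_mat_vec_sum[OF mat_of_cols_carrier(1)[of n "[col A 0]"] v, of 0] 0 A
      by (simp add: mat_of_cols_index)
    then have "v $ 0 = 0" using Mv diag 0 by simp
    then show "v = 0\<^sub>v (length [col A 0])" using v by (intro eq_vecI) auto
  qed (use A 0 in \<open>auto simp: cols_def\<close>)
  ultimately show ?thesis by simp
qed

lemma dependent_cols_if_rank_1:
  fixes A :: "complex mat"
  assumes A: "A \<in> carrier_mat n n" and r: "vec_space.rank n A = 1"
    and i: "i < n" and k: "k < n" and ik: "col A i \<noteq> col A k"
  obtains a b where "(a, b) \<noteq> (0, 0)" "\<And>r. r < n \<Longrightarrow> a * A $$ (r,i) + b * A $$ (r,k) = 0"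
proof -
  let ?M = "mat_of_cols n [col A i, col A k]"
  have M: "?M \<in> carrier_mat n 2"
    using mat_of_cols_carrier(1)[of n "[col A i, col A k]"] by (simp add: numeral_2_eq_2)
  have Mv: "(?M *\<^sub>v v) $ r = v $ 0 * A $$ (r,i) + v $ 1 * A $$ (r,k)"
    if "v \<in> carrier_vec 2" "r < n" for v r
    using index_mult_mat_vec_sum[OF M that] that A i k by (simp add: numeral_2_eq_2 mat_of_cols_index)
  have "\<not> vec_space.rank n A \<ge> length [col A i, col A k]" using r by simp
  then obtain v where v: "v \<in> carrier_vec 2" and Mv0: "?M *\<^sub>v v = 0\<^sub>v n" and v0: "v \<noteq> 0\<^sub>v 2"
    using rank_ge_length_if_cols_independent[OF A, of "[col A i, col A k]"] ik A i k
    by (force simp: cols_def numeral_2_eq_2)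
  have "(v $ 0, v $ 1) \<noteq> (0, 0)"
    using v v0 by (auto intro!: eq_vecI simp: less_2_cases_iff)
  moreover have "v $ 0 * A $$ (r,i) + v $ 1 * A $$ (r,k) = 0" if "r < n" for r
    using Mv[OF v that] Mv0 that by simp
  ultimately show ?thesis using that by blast
qed

text \<open>Rank one makes every column a multiple of every other one; the unit diagonal fixes the factors.\<close>
lemma cocycle_if_rank_1:
  fixes A :: "complex mat"
  assumes A: "A \<in> carrier_mat n n" and diag: "\<forall>i<n. A $$ (i,i) = 1" and r: "vec_space.rank n A = 1"
  shows "cocycle_mat n A"
  unfolding cocycle_mat_def
proof (intro allI impI)
  fix i j k assume i: "i < n" and j: "j < n" and k: "k < n"
  show "A $$ (i,j) * A $$ (j,k) = A $$ (i,k)"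
  proof (cases "col A j = col A k")
    case True
    have "A $$ (r,j) = A $$ (r,k)" if "r < n" for r
    proof -
      have "col A j $ r = col A k $ r" using True by simp
      then show ?thesis using that j k A by simp
    qed
    then show ?thesis using i j diag by auto
  next
    case False
    obtain a b where ab: "(a, b) \<noteq> (0, 0)" and dep: "\<And>r. r < n \<Longrightarrow> a * A $$ (r,j) + b * A $$ (r,k) = 0"
      using dependent_cols_if_rank_1[OF A r j k False] by blast
    have "a + b * A $$ (j,k) = 0" using dep[OF j] diag j by simp
    with ab have "b \<noteq> 0" by auto
    then have "A $$ (r,k) = - a / b * A $$ (r,j)" if "r < n" for r
      using dep[OF that] by (simp add: field_simps add_eq_0_iff)
    moreover have "A $$ (j,k) = - a / b" using \<open>a + b * A $$ (j,k) = 0\<close> \<open>b \<noteq> 0\<close>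
      by (simp add: field_simps add_eq_0_iff)
    ultimately show ?thesis using i by simp
  qed
qed

lemma hermitian_if_cocycle_unimodular:
  assumes A: "A \<in> carrier_mat n n" and diag: "\<forall>i<n. A $$ (i,i) = 1"
    and cocycle: "cocycle_mat n A" and unimod: "\<forall>i<n. \<forall>j<n. cmod (A $$ (i,j)) = 1"
  shows "mat_adjoint A = A"
proof (rule hermitianI[OF A])
  fix i j assume i: "i < n" and j: "j < n"
  have "A $$ (i,j) * A $$ (j,i) = 1" using cocycle diag i j by (auto simp: cocycle_mat_def)
  moreover have "A $$ (i,j) * cnj (A $$ (i,j)) = 1"
    using cnj_mult_self_eq_1[of "A $$ (i,j)"] unimod i j by (simp add: mult.commute)
  ultimately show "A $$ (j,i) = cnj (A $$ (i,j))" by (metis mult_left_cancel zero_neq_one mult_zero_left)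
qed

lemma rank_1_unimodular_iff_unimodular_dyad:
  assumes A: "A \<in> carrier_mat n n" and n: "n \<ge> 1"
  shows "(vec_space.rank n A = 1 \<and> (\<forall>i<n. \<forall>j<n. cmod (A $$ (i,j)) = 1) \<and> (\<forall>i<n. A $$ (i,i) = 1))
    \<longleftrightarrow> unimodular_dyad n A"
  using unimodular_dyadI[OF A n] hermitian_if_cocycle_unimodular[OF A] cocycle_if_rank_1[OF A]
    unimodular_dyadD[OF A] rank_eq_1_if_cocycle[OF A n] by metis

lemma eq_if_balanced_ratios:
  fixes r :: "nat \<Rightarrow> real"
  assumes pos: "\<forall>i<n. r i > 0"
    and balanced: "\<And>i. i < n \<Longrightarrow> (\<Sum>j<n. r i / r j) = (\<Sum>j<n. r j / r i)"
    and i: "i < n" and k: "k < n"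
  shows "r i = r k"
proof -
  define S1 where "S1 = (\<Sum>j<n. 1 / r j)"
  define S2 where "S2 = (\<Sum>j<n. r j)"
  have "S1 > 0" unfolding S1_def using pos i by (intro sum_pos) auto
  have sq: "(r l)\<^sup>2 = S2 / S1" if "l < n" for l
  proof -
    have "r l * S1 = S2 / r l"
      using balanced[OF that] unfolding S1_def S2_def by (simp add: sum_distrib_left sum_divide_distrib)
    moreover have "r l > 0" using pos that by simp
    ultimately show ?thesis using \<open>S1 > 0\<close> by (simp add: field_simps power2_eq_square)
  qed
  have "(r i)\<^sup>2 = (r k)\<^sup>2" using sq[OF i] sq[OF k] by simp
  then show ?thesis using pos i k by (simp add: power2_eq_iff_nonneg less_imp_le)
qed

text \<open>The cocycle identity gives \<open>|a\<^sub>i\<^sub>j|\<^sup>2 = r\<^sub>i / r\<^sub>j\<close> with \<open>r\<^sub>i = |a\<^sub>i\<^sub>0|\<^sup>2\<close>; normality equates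
  the diagonals of \<open>A A\<^sup>*\<close> and \<open>A\<^sup>* A\<close>, which forces all \<open>r\<^sub>i\<close> to be equal.\<close>
lemma cmod_eq_1_if_cocycle_normal:
  assumes A: "A \<in> carrier_mat n n" and n: "n \<ge> 1" and diag: "\<forall>i<n. A $$ (i,i) = 1"
    and cocycle: "cocycle_mat n A" and normal: "A * mat_adjoint A = mat_adjoint A * A"
    and i: "i < n" and j: "j < n"
  shows "cmod (A $$ (i,j)) = 1"
proof -
  have 0: "0 < n" using n by auto
  define r where "r i = (cmod (A $$ (i,0)))\<^sup>2" for i
  have inv: "A $$ (0,j) * A $$ (j,0) = 1" if "j < n" for j
    using cocycle diag that 0 by (auto simp: cocycle_mat_def)
  have r_pos: "\<forall>i<n. r i > 0"
  proof (intro allI impI)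
    fix i assume "i < n"
    then have "A $$ (i,0) \<noteq> 0" using inv[of i] by auto
    then show "r i > 0" unfolding r_def by simp
  qed
  have sq: "(cmod (A $$ (i,j)))\<^sup>2 = r i / r j" if i: "i < n" and j: "j < n" for i j
  proof -
    have "A $$ (i,j) = A $$ (i,0) * A $$ (0,j)" using cocycle i j 0 by (auto simp: cocycle_mat_def)
    moreover have "cmod (A $$ (0,j)) * cmod (A $$ (j,0)) = 1" using inv[OF j] by (metis norm_mult norm_one)
    ultimately have "cmod (A $$ (i,j)) = cmod (A $$ (i,0)) / cmod (A $$ (j,0))"
      using r_pos j unfolding r_def by (simp add: norm_mult field_simps)
    then show ?thesis unfolding r_def by (simp add: power_divide)
  qed
  have "(\<Sum>j<n. r i / r j) = (\<Sum>j<n. r j / r i)" if i: "i < n" for i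
  proof -
    have AH: "mat_adjoint A \<in> carrier_mat n n" using mat_adjoint_carrier[OF A] .
    have "complex_of_real (\<Sum>j<n. r i / r j) = (\<Sum>j<n. cnj (A $$ (i,j)) * A $$ (i,j))"
      unfolding sum_cnj_mult_self using sq i by simp
    also have "\<dots> = (A * mat_adjoint A) $$ (i,i)"
      using index_mult_mat_sum[OF A AH i i] index_mat_adjoint[OF A] i by (simp add: mult.commute)
    also have "\<dots> = (mat_adjoint A * A) $$ (i,i)" using normal by simp
    also have "\<dots> = (\<Sum>j<n. cnj (A $$ (j,i)) * A $$ (j,i))"
      using index_mult_mat_sum[OF AH A i i] index_mat_adjoint[OF A] i by simp
    also have "\<dots> = complex_of_real (\<Sum>j<n. r j / r i)"
      unfolding sum_cnj_mult_self using sq i by simp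
    finally show ?thesis by (simp only: of_real_eq_iff)
  qed
  then have "r k = r 0" if "k < n" for k using eq_if_balanced_ratios[OF r_pos _ that 0] by blast
  moreover have "r 0 = 1" using diag 0 unfolding r_def by simp
  ultimately have "(cmod (A $$ (i,j)))\<^sup>2 = 1" using sq[OF i j] i j by simp
  then show ?thesis using norm_ge_zero[of "A $$ (i,j)"] by (auto simp: power2_eq_1_iff)
qed

lemma rank_1_normal_iff_unimodular_dyad:
  assumes A: "A \<in> carrier_mat n n" and n: "n \<ge> 1"
  shows "(vec_space.rank n A = 1 \<and> A * mat_adjoint A = mat_adjoint A * A \<and> (\<forall>i<n. A $$ (i,i) = 1))
    \<longleftrightarrow> unimodular_dyad n A"
proof
  assume "vec_space.rank n A = 1 \<and> A * mat_adjoint A = mat_adjoint A * A \<and> (\<forall>i<n. A $$ (i,i) = 1)"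
  then show "unimodular_dyad n A"
    using rank_1_unimodular_iff_unimodular_dyad[OF A n] cmod_eq_1_if_cocycle_normal[OF A n]
      cocycle_if_rank_1[OF A] by blast
qed (use unimodular_dyadD[OF A] rank_eq_1_if_cocycle[OF A n] in simp)

section \<open>Diagonalisation of hermitian matrices\<close>

lemma hermitian_sesquilinear:
  assumes M: "M \<in> carrier_mat n n" and H: "mat_adjoint M = M"
    and v: "v \<in> carrier_vec n" and w: "w \<in> carrier_vec n"
  shows "(\<Sum>i<n. cnj ((M *\<^sub>v v) $ i) * w $ i) = (\<Sum>j<n. cnj (v $ j) * (M *\<^sub>v w) $ j)"
proof -
  have "(\<Sum>i<n. cnj ((M *\<^sub>v v) $ i) * w $ i) = (\<Sum>i<n. \<Sum>j<n. cnj (M $$ (i,j)) * cnj (v $ j) * w $ i)"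
    using index_mult_mat_vec_sum[OF M v] by (auto intro!: sum.cong simp: sum_distrib_right)
  also have "\<dots> = (\<Sum>j<n. \<Sum>i<n. cnj (M $$ (i,j)) * cnj (v $ j) * w $ i)" by (rule sum.swap)
  also have "\<dots> = (\<Sum>j<n. cnj (v $ j) * (\<Sum>i<n. M $$ (j,i) * w $ i))"
    using hermitian_entry[OF M H, symmetric] by (auto intro!: sum.cong simp: sum_distrib_left ac_simps)
  also have "\<dots> = (\<Sum>j<n. cnj (v $ j) * (M *\<^sub>v w) $ j)"
    using index_mult_mat_vec_sum[OF M w] by auto
  finally show ?thesis .
qed

lemma vec_eq_0_if_sum_cnj_mult_self_eq_0:
  assumes u: "u \<in> carrier_vec n" and s: "(\<Sum>i<n. cnj (u $ i) * u $ i) = 0"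
  shows "u = 0\<^sub>v n"
proof -
  have "(\<Sum>i<n. (cmod (u $ i))\<^sup>2) = 0" using s unfolding sum_cnj_mult_self by (simp only: of_real_eq_0_iff)
  then have "\<forall>i\<in>{..<n}. (cmod (u $ i))\<^sup>2 = 0" by (subst sum_nonneg_eq_0_iff[symmetric]) auto
  then show ?thesis using u by (intro eq_vecI) auto
qed

lemma hermitian_eigenvalue_real:
  assumes M: "M \<in> carrier_mat n n" and H: "mat_adjoint M = M" and e: "e \<in> spectrum M"
  shows "cnj e = e"
proof -
  obtain v where v: "v \<in> carrier_vec n" and v0: "v \<noteq> 0\<^sub>v n" and ev: "M *\<^sub>v v = e \<cdot>\<^sub>v v"
    using spectrumE[OF e M] by blast
  have "(\<Sum>i<n. cnj (e * v $ i) * v $ i) = (\<Sum>j<n. cnj (v $ j) * (e * v $ j))"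
    using hermitian_sesquilinear[OF M H v v] v unfolding ev by simp
  then have "cnj e * (\<Sum>i<n. cnj (v $ i) * v $ i) = e * (\<Sum>i<n. cnj (v $ i) * v $ i)"
    by (simp add: sum_distrib_left ac_simps)
  moreover have "(\<Sum>i<n. cnj (v $ i) * v $ i) \<noteq> 0" using vec_eq_0_if_sum_cnj_mult_self_eq_0[OF v] v0 by blast
  ultimately show ?thesis by simp
qed

lemma mat_kernel_hermitian_square:
  fixes M :: "complex mat"
  assumes M: "M \<in> carrier_mat n n" and H: "mat_adjoint M = M"
  shows "mat_kernel (M * M) = mat_kernel M"
proof
  show "mat_kernel M \<subseteq> mat_kernel (M * M)" by (rule mat_kernel_mult_subset[OF M M])
  show "mat_kernel (M * M) \<subseteq> mat_kernel M"
  proof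
    fix v assume "v \<in> mat_kernel (M * M)"
    then have v: "v \<in> carrier_vec n" and MMv: "M *\<^sub>v (M *\<^sub>v v) = 0\<^sub>v n"
      using M by (auto simp: mat_kernel_def)
    have Mv: "M *\<^sub>v v \<in> carrier_vec n" using M v by simp
    have "(\<Sum>i<n. cnj ((M *\<^sub>v v) $ i) * (M *\<^sub>v v) $ i) = (\<Sum>j<n. cnj (v $ j) * (M *\<^sub>v (M *\<^sub>v v)) $ j)"
      by (rule hermitian_sesquilinear[OF M H v Mv])
    also have "\<dots> = 0" using MMv by simp
    finally have "M *\<^sub>v v = 0\<^sub>v n" by (rule vec_eq_0_if_sum_cnj_mult_self_eq_0[OF Mv])
    then show "v \<in> mat_kernel M" using v M unfolding mat_kernel_def by auto
  qed
qed

lemma sum_list_map_fst_eq_length: "\<forall>x\<in>set xs. fst x = (1::nat) \<Longrightarrow> sum_list (map fst xs) = length xs"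
  by (induct xs) auto

lemma eq_if_sum_list_eq_and_le:
  fixes f g :: "'a \<Rightarrow> nat"
  assumes "sum_list (map f xs) = sum_list (map g xs)" "\<And>x. g x \<le> f x"
  shows "\<forall>x\<in>set xs. f x = g x"
  using assms(1)
proof (induct xs)
  case (Cons a xs)
  have "sum_list (map g xs) \<le> sum_list (map f xs)" using assms(2) by (induct xs) (auto intro: add_mono)
  then show ?case using Cons assms(2)[of a] by auto
qed simp

lemma jordan_matrix_unit_blocks:
  "\<forall>x\<in>set n_as. fst x = 1 \<Longrightarrow> jordan_matrix n_as = mat_diag (length n_as) (\<lambda>i. snd (n_as ! i))"
proof (induct n_as)
  case Nil
  show ?case by (rule eq_matI) (auto simp: jordan_matrix_def mat_diag_def)
next
  case (Cons x rest)
  obtain a where x: "x = (1, a)" using Cons by (cases x) auto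
  have IH: "jordan_matrix rest = mat_diag (length rest) (\<lambda>i. snd (rest ! i))" using Cons by auto
  have "sum_list (map fst rest) = length rest" using Cons sum_list_map_fst_eq_length by auto
  show ?case unfolding x jordan_matrix_Cons IH \<open>sum_list (map fst rest) = length rest\<close>
  proof (rule eq_matI)
    fix i j assume "i < dim_row (mat_diag (length ((1, a) # rest)) (\<lambda>i. snd (((1, a) # rest) ! i)))"
      "j < dim_col (mat_diag (length ((1, a) # rest)) (\<lambda>i. snd (((1, a) # rest) ! i)))"
    then have "i < Suc (length rest)" "j < Suc (length rest)" by (auto simp: mat_diag_def)
    then show "four_block_mat (jordan_block 1 a) (0\<^sub>m 1 (length rest)) (0\<^sub>m (length rest) 1)
        (mat_diag (length rest) (\<lambda>i. snd (rest ! i))) $$ (i, j)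
      = mat_diag (length ((1, a) # rest)) (\<lambda>i. snd (((1, a) # rest) ! i)) $$ (i, j)"
      by (cases i; cases j) (auto simp: mat_diag_def)
  qed (auto simp: mat_diag_def)
qed

text \<open>Since \<open>ker (A - e)\<^sup>2 = ker (A - e)\<close> for hermitian \<open>A\<close> and real \<open>e\<close>, no Jordan block has size \<open>\<ge> 2\<close>.\<close>
lemma jordan_nf_hermitian_unit_blocks:
  fixes A :: "complex mat"
  assumes A: "A \<in> carrier_mat n n" and H: "mat_adjoint A = A" and jnf: "jordan_nf A n_as"
  shows "\<forall>x\<in>set n_as. fst x = 1"
proof
  fix x assume x: "x \<in> set n_as"
  obtain s e where xe: "x = (s, e)" by force
  have s0: "s \<noteq> 0" using jnf x xe unfolding jordan_nf_def by force
  have "s \<le> Polynomial.order e (char_poly A)" using jordan_nf_block_size_order_bound[OF jnf] x xe by auto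
  then have "Polynomial.order e (char_poly A) \<noteq> 0" using s0 by auto
  then have "poly (char_poly A) e = 0" using order_root by blast
  then have real: "cnj e = e" using hermitian_eigenvalue_real[OF A H] spectrum_root_char_poly[OF A] by auto
  define M where "M = char_matrix A e"
  have M: "M \<in> carrier_mat n n" unfolding M_def using A by simp
  have MH: "mat_adjoint M = M"
  proof (rule hermitianI[OF M])
    fix i j assume "i < n" "j < n"
    then show "M $$ (j,i) = cnj (M $$ (i,j))"
      unfolding M_def char_matrix_def using A hermitian_entry[OF A H, of i j] real by auto
  qed
  have "dim_gen_eigenspace A e 2 = kernel_dim (M * M)"
    unfolding dim_gen_eigenspace_def M_def[symmetric] using M by (simp add: numeral_2_eq_2)
  also have "\<dots> = kernel_dim M"
    unfolding kernel_dim_def mat_kernel_hermitian_square[OF M MH] using M by simp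
  also have "\<dots> = dim_gen_eigenspace A e 1"
    unfolding dim_gen_eigenspace_def M_def[symmetric] using M by simp
  finally have "dim_gen_eigenspace A e 2 = dim_gen_eigenspace A e 1" .
  then have "\<forall>y\<in>set (map fst [(n, e')\<leftarrow>n_as . e' = e]). min 2 y = min 1 y"
    by (intro eq_if_sum_list_eq_and_le) (auto simp: dim_gen_eigenspace[OF jnf])
  moreover have "s \<in> set (map fst [(n, e')\<leftarrow>n_as . e' = e])" using x xe by force
  ultimately have "min 2 s = min 1 s" by blast
  then show "fst x = 1" using s0 xe by auto
qed

lemma prod_list_unit_blocks:
  "\<forall>x\<in>set n_as. fst x = 1 \<Longrightarrow>
   (\<Prod>(s, a)\<leftarrow>n_as. ([:- a, 1:] :: complex poly) ^ s) = (\<Prod>e\<leftarrow>map snd n_as. [:- e, 1:])"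
  by (induct n_as) auto

lemma spectrum_eq_set_if_char_poly_linear_factors:
  fixes A :: "complex mat"
  assumes A: "A \<in> carrier_mat n n" and cp: "char_poly A = (\<Prod>e\<leftarrow>es. [:- e, 1:])"
  shows "spectrum A = set es"
proof -
  have "poly (\<Prod>e\<leftarrow>es. [:- e, 1:]) k = 0 \<longleftrightarrow> k \<in> set es" for k :: complex
    by (induct es) auto
  then show ?thesis unfolding spectrum_root_char_poly[OF A] cp by auto
qed

lemma hermitian_diagonalization:
  fixes A :: "complex mat"
  assumes A: "A \<in> carrier_mat n n" and H: "mat_adjoint A = A"
  obtains P Q es where "P \<in> carrier_mat n n" "Q \<in> carrier_mat n n" "Q * P = 1\<^sub>m n"
    "A = P * mat_diag n (\<lambda>i. es ! i) * Q" "length es = n" "spectrum A = set es"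
    "\<And>a. Polynomial.order a (char_poly A) = length (filter (\<lambda>e. e = a) es)"
proof -
  obtain as where "char_poly A = (\<Prod>a\<leftarrow>as. [:- a, 1:])" using char_poly_factorized[OF A] by blast
  from jordan_nf_exists[OF A this] obtain n_as where jnf: "jordan_nf A n_as" by blast
  have blocks: "\<forall>x\<in>set n_as. fst x = 1" by (rule jordan_nf_hermitian_unit_blocks[OF A H jnf])
  define es where "es = map snd n_as"
  from jnf obtain P Q where "similar_mat_wit A (jordan_matrix n_as) P Q"
    unfolding jordan_nf_def similar_mat_def by blast
  then have car: "{A, jordan_matrix n_as, P, Q} \<subseteq> carrier_mat n n" and QP: "Q * P = 1\<^sub>m n"
    and eq: "A = P * jordan_matrix n_as * Q"
    using A unfolding similar_mat_wit_def Let_def by auto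
  have "dim_row (jordan_matrix n_as) = n" using car by auto
  then have len: "length es = n" using sum_list_map_fst_eq_length[OF blocks] by (simp add: es_def)
  have "jordan_matrix n_as = mat_diag n (\<lambda>i. es ! i)"
    unfolding jordan_matrix_unit_blocks[OF blocks] using len
    by (intro eq_matI) (auto simp: mat_diag_def es_def)
  moreover have "char_poly A = (\<Prod>e\<leftarrow>es. [:- e, 1:])"
    using jordan_nf_char_poly[OF jnf] prod_list_unit_blocks[OF blocks] by (simp add: es_def)
  moreover have "Polynomial.order a (char_poly A) = length (filter (\<lambda>e. e = a) es)" for a
    using jordan_nf_order[OF jnf, of a] sum_list_map_fst_eq_length[of "filter (\<lambda>na. snd na = a) n_as"] blocks
    unfolding es_def by (simp add: filter_map o_def)
  ultimately show ?thesis
    using that car QP eq len spectrum_eq_set_if_char_poly_linear_factors[OF A] by auto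
qed

definition mat_trace :: "complex mat \<Rightarrow> complex" where
  "mat_trace M = (\<Sum>i<dim_row M. M $$ (i,i))"

lemma mat_trace_mult_comm:
  assumes X: "X \<in> carrier_mat n m" and Y: "Y \<in> carrier_mat m n"
  shows "mat_trace (X * Y) = mat_trace (Y * X)"
proof -
  have "mat_trace (X * Y) = (\<Sum>i<n. \<Sum>k<m. X $$ (i,k) * Y $$ (k,i))"
    unfolding mat_trace_def using X Y
    by (auto intro!: sum.cong simp: index_mult_mat_sum[OF X Y] simp del: index_mult_mat(1))
  also have "\<dots> = (\<Sum>k<m. \<Sum>i<n. Y $$ (k,i) * X $$ (i,k))" by (subst sum.swap) (simp add: mult.commute)
  also have "\<dots> = mat_trace (Y * X)"
    unfolding mat_trace_def using X Y
    by (auto intro!: sum.cong simp: index_mult_mat_sum[OF Y X] simp del: index_mult_mat(1))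
  finally show ?thesis .
qed

lemma mat_trace_similar:
  assumes P: "P \<in> carrier_mat n n" and Q: "Q \<in> carrier_mat n n" and B: "B \<in> carrier_mat n n"
    and QP: "Q * P = 1\<^sub>m n"
  shows "mat_trace (P * B * Q) = mat_trace B"
proof -
  have "mat_trace (P * B * Q) = mat_trace (Q * (P * B))" by (rule mat_trace_mult_comm) (use P B Q in auto)
  also have "Q * (P * B) = (Q * P) * B" using P Q B by (simp add: assoc_mult_mat[of _ n n _ n])
  finally show ?thesis using QP B by simp
qed

lemma mat_trace_mat_diag: "mat_trace (mat_diag n f) = (\<Sum>i<n. f i)"
  unfolding mat_trace_def by (simp add: mat_diag_def)

lemma similar_square:
  fixes P Q D :: "complex mat"
  assumes P: "P \<in> carrier_mat n n" and Q: "Q \<in> carrier_mat n n" and D: "D \<in> carrier_mat n n"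
    and QP: "Q * P = 1\<^sub>m n"
  shows "(P * D * Q) * (P * D * Q) = P * (D * D) * Q"
proof -
  have "(P * D * Q) * (P * D * Q) = P * (D * ((Q * P) * (D * Q)))"
    using P Q D by (simp add: assoc_mult_mat[of _ n n _ n _ n])
  also have "\<dots> = P * (D * (D * Q))" using QP D Q left_mult_one_mat[OF mult_carrier_mat[OF D Q]] by simp
  also have "\<dots> = P * (D * D) * Q" using P Q D by (simp add: assoc_mult_mat[of _ n n _ n _ n])
  finally show ?thesis .
qed

lemma hermitian_eigenvalue_list:
  fixes A :: "complex mat"
  assumes A: "A \<in> carrier_mat n n" and H: "mat_adjoint A = A"
  obtains es where "length es = n" "spectrum A = set es"
    "\<And>a. Polynomial.order a (char_poly A) = length (filter (\<lambda>e. e = a) es)"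
    "mat_trace A = (\<Sum>i<n. es ! i)" "mat_trace (A * A) = (\<Sum>i<n. es ! i * es ! i)"
proof -
  obtain P Q es where P: "P \<in> carrier_mat n n" and Q: "Q \<in> carrier_mat n n" and QP: "Q * P = 1\<^sub>m n"
    and eq: "A = P * mat_diag n (\<lambda>i. es ! i) * Q" and facts: "length es = n" "spectrum A = set es"
    "\<And>a. Polynomial.order a (char_poly A) = length (filter (\<lambda>e. e = a) es)"
    using hermitian_diagonalization[OF A H] by blast
  define D where "D = mat_diag n (\<lambda>i. es ! i)"
  have D: "D \<in> carrier_mat n n" unfolding D_def by simp
  have "mat_trace A = mat_trace D" unfolding eq D_def[symmetric] by (rule mat_trace_similar[OF P Q D QP])
  then have trA: "mat_trace A = (\<Sum>i<n. es ! i)" unfolding D_def mat_trace_mat_diag .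
  have "mat_trace (A * A) = mat_trace (D * D)"
    unfolding eq D_def[symmetric] similar_square[OF P Q D QP]
    by (rule mat_trace_similar[OF P Q mult_carrier_mat[OF D D] QP])
  then have trAA: "mat_trace (A * A) = (\<Sum>i<n. es ! i * es ! i)"
    unfolding D_def mat_diag_diag mat_trace_mat_diag .
  show ?thesis by (rule that[OF facts trA trAA])
qed

lemma square_eq_smult_if_hermitian_spectrum:
  fixes A :: "complex mat"
  assumes A: "A \<in> carrier_mat n n" and H: "mat_adjoint A = A" and sp: "spectrum A \<subseteq> {0, c}"
  shows "A * A = c \<cdot>\<^sub>m A"
proof -
  obtain P Q es where P: "P \<in> carrier_mat n n" and Q: "Q \<in> carrier_mat n n" and QP: "Q * P = 1\<^sub>m n"
    and eq: "A = P * mat_diag n (\<lambda>i. es ! i) * Q" and len: "length es = n" and spe: "spectrum A = set es"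
    by (rule hermitian_diagonalization[OF A H])
  define D where "D = mat_diag n (\<lambda>i. es ! i)"
  have D: "D \<in> carrier_mat n n" unfolding D_def by simp
  have "\<forall>i<n. es ! i \<in> {0, c}" using sp spe len nth_mem by blast
  then have "D * D = c \<cdot>\<^sub>m D" unfolding D_def mat_diag_diag by (intro eq_matI) (auto simp: mat_diag_def)
  then have "A * A = P * (c \<cdot>\<^sub>m D) * Q" unfolding eq D_def[symmetric] similar_square[OF P Q D QP] by simp
  also have "\<dots> = c \<cdot>\<^sub>m (P * D * Q)"
    using P Q D by (simp add: mult_smult_distrib[of _ n n _ n] mult_smult_assoc_mat[of _ n n _ n])
  finally show ?thesis unfolding eq D_def .
qed

section \<open>Spectrum \<open>{0, n}\<close> and the norm of the Schur map\<close>

lemma eq_1_if_unimodular_sum_eq_card: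
  fixes z :: "nat \<Rightarrow> complex"
  assumes unimod: "\<forall>j<n. cmod (z j) = 1" and sum: "(\<Sum>j<n. z j) = of_nat n" and j: "j < n"
  shows "z j = 1"
proof -
  have "(\<Sum>j<n. 1 - Re (z j)) = 0"
    using arg_cong[OF sum, of Re] by (simp add: Re_sum sum_subtractf)
  moreover have "0 \<le> 1 - Re (z j)" if "j < n" for j using unimod that complex_Re_le_cmod[of "z j"] by simp
  ultimately have "Re (z j) = 1" using j sum_nonneg_eq_0_iff[of "{..<n}" "\<lambda>j. 1 - Re (z j)"] by auto
  moreover have "(Re (z j))\<^sup>2 + (Im (z j))\<^sup>2 = 1" using unimod j cmod_power2[of "z j"] by simp
  ultimately show ?thesis by (simp add: complex_eq_iff)
qed

lemma row_norm_if_square_eq_smult: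
  fixes A :: "complex mat"
  assumes A: "A \<in> carrier_mat n n" and H: "mat_adjoint A = A" and diag: "\<forall>i<n. A $$ (i,i) = 1"
    and AA: "A * A = of_nat n \<cdot>\<^sub>m A" and i: "i < n"
  shows "(\<Sum>j<n. (cmod (A $$ (i,j)))\<^sup>2) = real n"
proof -
  have "complex_of_real (\<Sum>j<n. (cmod (A $$ (i,j)))\<^sup>2) = (\<Sum>j<n. A $$ (j,i) * A $$ (i,j))"
    unfolding sum_cnj_mult_self[symmetric] using hermitian_entry[OF A H i] by (intro sum.cong) auto
  also have "\<dots> = (A * A) $$ (i,i)" using index_mult_mat_sum[OF A A i i] by (simp add: mult.commute)
  also have "\<dots> = of_nat n" using AA A diag i by simp
  finally show ?thesis by (metis of_real_eq_iff of_real_of_nat_eq)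
qed

text \<open>\<open>n |a\<^sub>i\<^sub>k| = |\<Sum>\<^sub>j a\<^sub>i\<^sub>j a\<^sub>j\<^sub>k| \<le> (\<Sum>\<^sub>j |a\<^sub>i\<^sub>j|\<^sup>2 + |a\<^sub>j\<^sub>k|\<^sup>2) / 2 = n\<close>, so all entries lie in the unit
  disc, and a row of such entries with squared norm \<open>n\<close> lies on the unit circle.\<close>
lemma cmod_eq_1_if_square_eq_smult:
  fixes A :: "complex mat"
  assumes A: "A \<in> carrier_mat n n" and H: "mat_adjoint A = A" and diag: "\<forall>i<n. A $$ (i,i) = 1"
    and AA: "A * A = of_nat n \<cdot>\<^sub>m A" and i: "i < n" and j: "j < n"
  shows "cmod (A $$ (i,j)) = 1"
proof -
  note row = row_norm_if_square_eq_smult[OF A H diag AA]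
  have col: "(\<Sum>j<n. (cmod (A $$ (j,k)))\<^sup>2) = real n" if k: "k < n" for k
    using row[OF k] hermitian_entry[OF A H k] by (simp add: norm_ge_zero)
  have le1: "cmod (A $$ (i,k)) \<le> 1" if k: "k < n" for k
  proof -
    have "real n * cmod (A $$ (i,k)) = cmod (\<Sum>j<n. A $$ (i,j) * A $$ (j,k))"
      using arg_cong[OF AA, of "\<lambda>M. M $$ (i,k)"] index_mult_mat_sum[OF A A i k] A i k by (simp add: norm_mult)
    also have "\<dots> \<le> (\<Sum>j<n. cmod (A $$ (i,j)) * cmod (A $$ (j,k)))"
      by (rule order.trans[OF norm_sum]) (simp add: norm_mult)
    also have "\<dots> \<le> (\<Sum>j<n. ((cmod (A $$ (i,j)))\<^sup>2 + (cmod (A $$ (j,k)))\<^sup>2) / 2)"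
    proof (rule sum_mono)
      fix j
      have "0 \<le> (cmod (A $$ (i,j)) - cmod (A $$ (j,k)))\<^sup>2" by simp
      then show "cmod (A $$ (i,j)) * cmod (A $$ (j,k)) \<le> ((cmod (A $$ (i,j)))\<^sup>2 + (cmod (A $$ (j,k)))\<^sup>2) / 2"
        by (simp add: power2_eq_square algebra_simps)
    qed
    also have "\<dots> = real n" using row[OF i] col[OF k] by (simp add: sum_divide_distrib[symmetric] sum.distrib)
    finally show ?thesis using i by simp
  qed
  have "(\<Sum>j<n. 1 - (cmod (A $$ (i,j)))\<^sup>2) = 0" using row[OF i] by (simp add: sum_subtractf)
  moreover have "0 \<le> 1 - (cmod (A $$ (i,j)))\<^sup>2" if "j < n" for j using le1[OF that] by (simp add: power_le_one)
  ultimately have "(cmod (A $$ (i,j)))\<^sup>2 = 1"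
    using j sum_nonneg_eq_0_iff[of "{..<n}" "\<lambda>j. 1 - (cmod (A $$ (i,j)))\<^sup>2"] by auto
  then show ?thesis using norm_ge_zero[of "A $$ (i,j)"] by (auto simp: power2_eq_1_iff)
qed

text \<open>Equality in the triangle inequality: the \<open>n\<close> unit numbers \<open>a\<^sub>i\<^sub>j a\<^sub>j\<^sub>k / a\<^sub>i\<^sub>k\<close> sum to \<open>n\<close>.\<close>
lemma cocycle_if_square_eq_smult:
  fixes A :: "complex mat"
  assumes A: "A \<in> carrier_mat n n" and H: "mat_adjoint A = A" and diag: "\<forall>i<n. A $$ (i,i) = 1"
    and AA: "A * A = of_nat n \<cdot>\<^sub>m A"
  shows "cocycle_mat n A"
  unfolding cocycle_mat_def
proof (intro allI impI)
  fix i j k assume i: "i < n" and j: "j < n" and k: "k < n"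
  note unimod = cmod_eq_1_if_square_eq_smult[OF A H diag AA]
  define z where "z j = cnj (A $$ (i,k)) * (A $$ (i,j) * A $$ (j,k))" for j
  have ca: "cnj (A $$ (i,k)) * A $$ (i,k) = 1" using cnj_mult_self_eq_1 unimod[OF i k] by auto
  have "(\<Sum>j<n. z j) = cnj (A $$ (i,k)) * (A * A) $$ (i,k)"
    unfolding z_def sum_distrib_left[symmetric] using index_mult_mat_sum[OF A A i k] by simp
  also have "\<dots> = of_nat n" using AA A i k ca by (simp add: ac_simps)
  finally have "z j = 1"
    by (intro eq_1_if_unimodular_sum_eq_card[OF _ _ j]) (use unimod i k in \<open>simp add: z_def norm_mult\<close>)
  then have "A $$ (i,k) * (cnj (A $$ (i,k)) * (A $$ (i,j) * A $$ (j,k))) = A $$ (i,k)" unfolding z_def by simp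
  then show "A $$ (i,j) * A $$ (j,k) = A $$ (i,k)"
    using ca by (simp add: mult.assoc[symmetric] mult.commute[of "A $$ (i,k)"])
qed

lemma unimodular_dyad_if_spectrum:
  fixes A :: "complex mat"
  assumes A: "A \<in> carrier_mat n n" and n: "n \<ge> 1" and H: "mat_adjoint A = A"
    and diag: "\<forall>i<n. A $$ (i,i) = 1" and sp: "spectrum A \<subseteq> {0, of_nat n}"
  shows "unimodular_dyad n A"
  using square_eq_smult_if_hermitian_spectrum[OF A H sp]
  by (intro unimodular_dyadI[OF A n diag H] cocycle_if_square_eq_smult[OF A H diag])

lemma sum_list_eq_count_if_two_valued:
  assumes "\<forall>e\<in>set es. e = 0 \<or> e = (c :: complex)"
  shows "sum_list es = of_nat (length (filter (\<lambda>e. e \<noteq> 0) es)) * c"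
  using assms by (induct es) (auto simp: algebra_simps)

text \<open>The eigenvalues lie in \<open>{0, n}\<close> and sum to the trace \<open>n\<close>, so exactly one of them is \<open>n\<close>.\<close>
lemma order_0_char_poly_unimodular_dyad:
  fixes A :: "complex mat"
  assumes A: "A \<in> carrier_mat n n" and n: "n \<ge> 1" and P: "unimodular_dyad n A"
  shows "Polynomial.order 0 (char_poly A) = n - 1"
proof -
  obtain es where len: "length es = n" and spe: "spectrum A = set es"
    and ord: "\<And>a. Polynomial.order a (char_poly A) = length (filter (\<lambda>e. e = a) es)"
    and trA: "mat_trace A = (\<Sum>i<n. es ! i)"
    using hermitian_eigenvalue_list[OF A unimodular_dyadD(1)[OF A P]] by metis
  have "\<forall>e\<in>set es. e = 0 \<or> e = of_nat n" using spectrum_unimodular_dyad[OF A P] spe by auto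
  moreover have "sum_list es = of_nat n"
    using trA A unimodular_dyadD(2)[OF A P] len
    by (simp add: mat_trace_def sum_list_sum_nth atLeast0LessThan)
  ultimately have "of_nat (length (filter (\<lambda>e. e \<noteq> 0) es) * n) = (of_nat n :: complex)"
    using sum_list_eq_count_if_two_valued by simp
  then have "length (filter (\<lambda>e. e \<noteq> 0) es) = 1" using n by (simp only: of_nat_eq_iff) simp
  then show ?thesis using ord sum_length_filter_compl[of "\<lambda>e. e = 0" es] len by simp
qed

lemma vnorm_unimodular_scale:
  assumes v: "v \<in> carrier_vec n" and c: "\<forall>i<n. cmod (c i) = 1"
  shows "vnorm (vec n (\<lambda>i. c i * v $ i)) = vnorm v"
  unfolding vnorm_def using v c by (auto intro!: arg_cong[of _ _ sqrt] sum.cong simp: norm_mult)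

lemma op_norm_schur_prod_unimodular_dyad:
  assumes A: "A \<in> carrier_mat n n" and P: "unimodular_dyad n A" and B: "B \<in> carrier_mat n n"
  shows "op_norm (schur_prod A B) = op_norm B"
proof -
  obtain d where d1: "\<forall>i<n. cmod (d i) = 1" and d: "\<forall>i<n. \<forall>j<n. A $$ (i,j) = d i * cnj (d j)"
    using unimodular_dyadE[OF P] by blast
  have S: "schur_prod A B \<in> carrier_mat n n" using A by (rule schur_prod_carrier)
  define f where "f x = vec n (\<lambda>j. cnj (d j) * x $ j)" for x :: "complex vec"
  define g where "g y = vec n (\<lambda>j. d j * y $ j)" for y :: "complex vec"
  have fc: "f x \<in> carrier_vec n" and gc: "g x \<in> carrier_vec n" for x unfolding f_def g_def by simp_all
  have fg: "f (g y) = y" if "y \<in> carrier_vec n" for y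
    using that cnj_mult_self_eq_1 d1 unfolding f_def g_def by (intro eq_vecI) (auto simp: mult.assoc[symmetric])
  have vf: "vnorm (f x) = vnorm x" and vg: "vnorm (g x) = vnorm x" if "x \<in> carrier_vec n" for x
    unfolding f_def g_def using vnorm_unimodular_scale[OF that] d1 by auto
  have vS: "vnorm (schur_prod A B *\<^sub>v x) = vnorm (B *\<^sub>v f x)" if x: "x \<in> carrier_vec n" for x
  proof -
    have "schur_prod A B *\<^sub>v x = vec n (\<lambda>i. d i * (B *\<^sub>v f x) $ i)"
      unfolding f_def by (rule schur_prod_dyad_mult_vec[OF A d B x])
    moreover have "B *\<^sub>v f x \<in> carrier_vec n" using B fc by simp
    ultimately show ?thesis using vnorm_unimodular_scale[OF _ d1] by simp
  qed
  have "{vnorm (schur_prod A B *\<^sub>v x) | x. x \<in> carrier_vec (dim_col (schur_prod A B)) \<and> vnorm x \<le> 1}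
      = {vnorm (B *\<^sub>v y) | y. y \<in> carrier_vec (dim_col B) \<and> vnorm y \<le> 1}"
  proof (intro equalityI subsetI)
    fix r assume "r \<in> {vnorm (schur_prod A B *\<^sub>v x) | x. x \<in> carrier_vec (dim_col (schur_prod A B)) \<and> vnorm x \<le> 1}"
    then obtain x where "x \<in> carrier_vec n" "vnorm x \<le> 1" "r = vnorm (schur_prod A B *\<^sub>v x)"
      using S by auto
    then show "r \<in> {vnorm (B *\<^sub>v y) | y. y \<in> carrier_vec (dim_col B) \<and> vnorm y \<le> 1}"
      using vS vf fc B by fastforce
  next
    fix r assume "r \<in> {vnorm (B *\<^sub>v y) | y. y \<in> carrier_vec (dim_col B) \<and> vnorm y \<le> 1}"
    then obtain y where y: "y \<in> carrier_vec n" "vnorm y \<le> 1" and r: "r = vnorm (B *\<^sub>v y)"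
      using B by auto
    have "r = vnorm (schur_prod A B *\<^sub>v g y)" using vS[OF gc] fg[OF y(1)] r by simp
    then show "r \<in> {vnorm (schur_prod A B *\<^sub>v x) | x. x \<in> carrier_vec (dim_col (schur_prod A B)) \<and> vnorm x \<le> 1}"
      using vg[OF y(1)] y gc S by auto
  qed
  then show ?thesis unfolding op_norm_def by simp
qed

lemma op_norm_one_mat:
  assumes n: "n \<ge> 1"
  shows "op_norm (1\<^sub>m n) = 1"
proof -
  have "{vnorm (1\<^sub>m n *\<^sub>v x) | x. x \<in> carrier_vec (dim_col (1\<^sub>m n :: complex mat)) \<and> vnorm x \<le> 1}
      = {vnorm x | x. x \<in> carrier_vec n \<and> vnorm x \<le> 1}"
    by force
  moreover have "vnorm (unit_vec n 0 :: complex vec) = 1"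
  proof -
    have "(\<Sum>i<n. (cmod ((unit_vec n 0 :: complex vec) $ i))\<^sup>2) = (\<Sum>i<n. if i = 0 then 1 else 0)"
      by (rule sum.cong) (auto simp: unit_vec_def)
    then show ?thesis using n unfolding vnorm_def by simp
  qed
  then have "Sup {vnorm x | x. x \<in> carrier_vec n \<and> vnorm x \<le> 1} = 1"
    by (intro cSup_eq_maximum) (auto intro!: exI[of _ "unit_vec n 0"])
  ultimately show ?thesis unfolding op_norm_def by simp
qed

lemma schur_map_norm_unimodular_dyad:
  assumes A: "A \<in> carrier_mat n n" and n: "n \<ge> 1" and P: "unimodular_dyad n A"
  shows "schur_map_norm n A = 1"
proof -
  have "{op_norm (schur_prod A B) | B. B \<in> carrier_mat n n \<and> op_norm B \<le> 1}
      = {op_norm B | B. B \<in> carrier_mat n n \<and> op_norm B \<le> 1}"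
    using op_norm_schur_prod_unimodular_dyad[OF A P] by force
  moreover have "Sup {op_norm B | B. B \<in> carrier_mat n n \<and> op_norm B \<le> 1} = 1"
    by (intro cSup_eq_maximum) (use op_norm_one_mat[OF n] in \<open>auto intro!: exI[of _ "1\<^sub>m n"]\<close>)
  ultimately show ?thesis unfolding schur_map_norm_def by simp
qed

lemma spectral_iff_unimodular_dyad:
  assumes A: "A \<in> carrier_mat n n" and n: "n \<ge> 1" and diag: "\<forall>i<n. A $$ (i,i) = 1"
  shows "(mat_adjoint A = A \<and> spectrum A \<subseteq> {0, of_nat n} \<and>
      Polynomial.order 0 (char_poly A) = n - 1 \<and> schur_map_norm n A = 1) \<longleftrightarrow> unimodular_dyad n A"
  using unimodular_dyad_if_spectrum[OF A n _ diag] unimodular_dyadD(1)[OF A] spectrum_unimodular_dyad[OF A]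
    order_0_char_poly_unimodular_dyad[OF A n] schur_map_norm_unimodular_dyad[OF A n] by blast

section \<open>Positivity of \<open>A\<close> and of its entrywise inverse\<close>

lemma sum_power2_le_if_sum_eq:
  fixes r :: "nat \<Rightarrow> real"
  assumes nonneg: "\<forall>i<n. r i \<ge> 0" and sum: "(\<Sum>i<n. r i) = N"
  shows "(\<Sum>i<n. (r i)\<^sup>2) \<le> N\<^sup>2"
    and "(\<Sum>i<n. (r i)\<^sup>2) = N\<^sup>2 \<Longrightarrow> \<forall>i<n. r i = 0 \<or> r i = N"
proof -
  have "r i \<le> N" if "i < n" for i
    unfolding sum[symmetric] by (rule member_le_sum) (use that nonneg in auto)
  then have le: "0 \<le> N * r i - (r i)\<^sup>2" if "i < n" for i
    using mult_right_mono[of "r i" N "r i"] nonneg that by (simp add: power2_eq_square)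
  have diff: "(\<Sum>i<n. N * r i - (r i)\<^sup>2) = N\<^sup>2 - (\<Sum>i<n. (r i)\<^sup>2)"
    by (simp add: sum_subtractf sum_distrib_left[symmetric] sum power2_eq_square)
  show "(\<Sum>i<n. (r i)\<^sup>2) \<le> N\<^sup>2" using sum_nonneg[of "{..<n}" "\<lambda>i. N * r i - (r i)\<^sup>2"] le diff by simp
  assume "(\<Sum>i<n. (r i)\<^sup>2) = N\<^sup>2"
  then have "\<forall>i\<in>{..<n}. N * r i - (r i)\<^sup>2 = 0"
    using sum_nonneg_eq_0_iff[of "{..<n}" "\<lambda>i. N * r i - (r i)\<^sup>2"] le diff by simp
  then have "r i * (N - r i) = 0" if "i < n" for i using that by (auto simp: power2_eq_square algebra_simps)
  then show "\<forall>i<n. r i = 0 \<or> r i = N" by auto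
qed

lemma mat_trace_square_hermitian:
  assumes X: "X \<in> carrier_mat n n" and H: "mat_adjoint X = X"
  shows "mat_trace (X * X) = complex_of_real (\<Sum>i<n. \<Sum>j<n. (cmod (X $$ (i,j)))\<^sup>2)"
proof -
  have "mat_trace (X * X) = (\<Sum>i<n. \<Sum>j<n. X $$ (i,j) * X $$ (j,i))"
    unfolding mat_trace_def using X
    by (auto intro!: sum.cong simp: index_mult_mat_sum[OF X X] simp del: index_mult_mat(1))
  also have "\<dots> = (\<Sum>i<n. \<Sum>j<n. cnj (X $$ (i,j)) * X $$ (i,j))"
  proof (intro sum.cong refl)
    fix i j assume "i \<in> {..<n}" "j \<in> {..<n}"
    then show "X $$ (i,j) * X $$ (j,i) = cnj (X $$ (i,j)) * X $$ (i,j)"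
      using hermitian_entry[OF X H, of i j] by simp
  qed
  finally show ?thesis unfolding sum_cnj_mult_self of_real_sum .
qed

text \<open>For positive \<open>X\<close> with unit diagonal the eigenvalues \<open>r\<^sub>i \<ge> 0\<close> satisfy \<open>\<Sum> r\<^sub>i = tr X = n\<close>, and
  \<open>\<Sum>\<^sub>i\<^sub>j |x\<^sub>i\<^sub>j|\<^sup>2 = tr X\<^sup>2 = \<Sum> r\<^sub>i\<^sup>2\<close>.\<close>
lemma positive_mat_frobenius_bound:
  fixes X :: "complex mat"
  assumes X: "X \<in> carrier_mat n n" and pos: "positive_mat X" and diag: "\<forall>i<n. X $$ (i,i) = 1"
  shows "(\<Sum>i<n. \<Sum>j<n. (cmod (X $$ (i,j)))\<^sup>2) \<le> (real n)\<^sup>2"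
    and "(\<Sum>i<n. \<Sum>j<n. (cmod (X $$ (i,j)))\<^sup>2) = (real n)\<^sup>2 \<Longrightarrow> spectrum X \<subseteq> {0, of_nat n}"
proof -
  have H: "mat_adjoint X = X" using pos unfolding positive_mat_def by auto
  obtain es where len: "length es = n" and spe: "spectrum X = set es"
    and trX: "mat_trace X = (\<Sum>i<n. es ! i)" and trXX: "mat_trace (X * X) = (\<Sum>i<n. es ! i * es ! i)"
    using hermitian_eigenvalue_list[OF X H] by metis
  define r where "r i = Re (es ! i)" for i
  have es_r: "es ! i = complex_of_real (r i)" and r_nonneg: "r i \<ge> 0" if "i < n" for i
  proof -
    have "es ! i \<in> spectrum X" using spe len that by auto
    then have "Im (es ! i) = 0" "Re (es ! i) \<ge> 0" using pos unfolding positive_mat_def by auto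
    then show "es ! i = complex_of_real (r i)" "r i \<ge> 0" unfolding r_def by (auto simp: complex_eq_iff)
  qed
  have "mat_trace X = of_nat n" unfolding mat_trace_def using X diag by simp
  then have "(\<Sum>i<n. r i) = real n" using trX unfolding r_def Re_sum[symmetric] by simp
  note bound = sum_power2_le_if_sum_eq[of n r, OF _ this]
  have "complex_of_real (\<Sum>i<n. \<Sum>j<n. (cmod (X $$ (i,j)))\<^sup>2) = mat_trace (X * X)"
    by (rule mat_trace_square_hermitian[OF X H, symmetric])
  also have "\<dots> = (\<Sum>i<n. complex_of_real ((r i)\<^sup>2))"
    unfolding trXX by (rule sum.cong) (simp_all add: es_r power2_eq_square)
  also have "\<dots> = complex_of_real (\<Sum>i<n. (r i)\<^sup>2)" by (simp only: of_real_sum)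
  finally have frob: "(\<Sum>i<n. \<Sum>j<n. (cmod (X $$ (i,j)))\<^sup>2) = (\<Sum>i<n. (r i)\<^sup>2)" by (simp only: of_real_eq_iff)
  show "(\<Sum>i<n. \<Sum>j<n. (cmod (X $$ (i,j)))\<^sup>2) \<le> (real n)\<^sup>2" unfolding frob using bound(1) r_nonneg by auto
  assume "(\<Sum>i<n. \<Sum>j<n. (cmod (X $$ (i,j)))\<^sup>2) = (real n)\<^sup>2"
  then have "\<forall>i<n. r i = 0 \<or> r i = real n" using bound(2) r_nonneg frob by auto
  then have "es ! i \<in> {0, of_nat n}" if "i < n" for i using es_r[OF that] that by auto
  show "spectrum X \<subseteq> {0, of_nat n}" unfolding spe
  proof
    fix e assume "e \<in> set es"
    then obtain i where "i < n" "e = es ! i" using len by (auto simp: in_set_conv_nth)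
    then show "e \<in> {0, of_nat n}" using \<open>\<And>i. i < n \<Longrightarrow> es ! i \<in> {0, of_nat n}\<close> by blast
  qed
qed

text \<open>AM-GM: \<open>\<Sum> (x\<^sub>i + 1/x\<^sub>i - 2) \<le> 0\<close> with nonnegative summands \<open>(x\<^sub>i - 1)\<^sup>2 / x\<^sub>i\<close>.\<close>
lemma eq_1_if_sum_and_sum_inverse_le_card:
  fixes x :: "'a \<Rightarrow> real"
  assumes I: "finite I" and pos: "\<forall>i\<in>I. x i > 0"
    and le: "(\<Sum>i\<in>I. x i) \<le> card I" and le_inv: "(\<Sum>i\<in>I. 1 / x i) \<le> card I" and i: "i \<in> I"
  shows "x i = 1"
proof -
  define f where "f j = x j + 1 / x j - 2" for j
  have f_eq: "f j = (x j - 1)\<^sup>2 / x j" and f_nonneg: "0 \<le> f j" if "j \<in> I" for j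
  proof -
    have "x j > 0" using pos that by blast
    then show "f j = (x j - 1)\<^sup>2 / x j" unfolding f_def by (simp add: field_simps power2_eq_square)
    with \<open>x j > 0\<close> show "0 \<le> f j" by simp
  qed
  have "sum f I \<le> 0" unfolding f_def using le le_inv by (simp add: sum.distrib sum_subtractf)
  moreover have "0 \<le> sum f I" by (rule sum_nonneg) (rule f_nonneg)
  ultimately have "sum f I = 0" by linarith
  then have "f i = 0" by (metis sum_nonneg_eq_0_iff[OF I] f_nonneg i)
  then have "(x i - 1)\<^sup>2 / x i = 0" using f_eq[OF i] by simp
  moreover have "x i \<noteq> 0" using pos i by auto
  ultimately show ?thesis by simp
qed

lemma entry_inv_carrier: "A \<in> carrier_mat n n \<Longrightarrow> entry_inv A \<in> carrier_mat n n"
  by (simp add: entry_inv_def)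

lemma index_entry_inv: "A \<in> carrier_mat n n \<Longrightarrow> i < n \<Longrightarrow> j < n \<Longrightarrow> entry_inv A $$ (i,j) = 1 / A $$ (i,j)"
  by (simp add: entry_inv_def)

lemma unimodular_dyad_if_positive_entry_inv:
  fixes A :: "complex mat"
  assumes A: "A \<in> carrier_mat n n" and n: "n \<ge> 1" and nz: "\<forall>i<n. \<forall>j<n. A $$ (i,j) \<noteq> 0"
    and posA: "positive_mat A" and posI: "positive_mat (entry_inv A)" and diag: "\<forall>i<n. A $$ (i,i) = 1"
  shows "unimodular_dyad n A"
proof -
  let ?I = "{..<n} \<times> {..<n}"
  define x where "x = (\<lambda>(i,j). (cmod (A $$ (i,j)))\<^sup>2)"
  have card: "real (card ?I) = (real n)\<^sup>2" by (simp add: card_cartesian_product power2_eq_square)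
  have frob: "(\<Sum>i<n. \<Sum>j<n. f i j) = (\<Sum>(i,j)\<in>?I. f i j)" for f :: "nat \<Rightarrow> nat \<Rightarrow> real"
    by (rule sum.cartesian_product)
  have "(\<Sum>p\<in>?I. x p) \<le> card ?I"
    using positive_mat_frobenius_bound(1)[OF A posA diag] unfolding frob card x_def .
  moreover have "(\<Sum>p\<in>?I. 1 / x p) \<le> card ?I"
  proof -
    have "(\<Sum>p\<in>?I. 1 / x p) = (\<Sum>i<n. \<Sum>j<n. (cmod (entry_inv A $$ (i,j)))\<^sup>2)"
      unfolding frob x_def by (intro sum.cong) (auto simp: index_entry_inv[OF A] norm_divide power_divide)
    also have "\<dots> \<le> card ?I"
      unfolding card using diag index_entry_inv[OF A]
      by (intro positive_mat_frobenius_bound(1)[OF entry_inv_carrier[OF A] posI]) simp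
    finally show ?thesis .
  qed
  moreover have "\<forall>p\<in>?I. x p > 0" using nz unfolding x_def by auto
  ultimately have "\<forall>p\<in>?I. x p = 1" using eq_1_if_sum_and_sum_inverse_le_card[of ?I x] by blast
  then have "(\<Sum>p\<in>?I. x p) = (\<Sum>p\<in>?I. 1)" by (intro sum.cong) auto
  then have "(\<Sum>p\<in>?I. x p) = (real n)\<^sup>2" using card by simp
  then have "(\<Sum>i<n. \<Sum>j<n. (cmod (A $$ (i,j)))\<^sup>2) = (real n)\<^sup>2" unfolding frob x_def .
  then have "spectrum A \<subseteq> {0, of_nat n}" by (rule positive_mat_frobenius_bound(2)[OF A posA diag])
  moreover have "mat_adjoint A = A" using posA unfolding positive_mat_def by auto
  ultimately show ?thesis using unimodular_dyad_if_spectrum[OF A n _ diag] by blast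
qed

lemma unimodular_dyad_entry_inv:
  assumes A: "A \<in> carrier_mat n n" and P: "unimodular_dyad n A"
  shows "unimodular_dyad n (entry_inv A)"
proof -
  obtain d where d1: "\<forall>i<n. cmod (d i) = 1" and d: "\<forall>i<n. \<forall>j<n. A $$ (i,j) = d i * cnj (d j)"
    using unimodular_dyadE[OF P] by blast
  have u: "d k * cnj (d k) = 1" if "k < n" for k using cnj_mult_self_eq_1 d1 that by (simp add: mult.commute)
  have "1 / (d i * cnj (d j)) = cnj (d i) * cnj (cnj (d j))" if "i < n" "j < n" for i j
  proof -
    have "(d i * cnj (d j)) * (cnj (d i) * d j) = (d i * cnj (d i)) * (d j * cnj (d j))" by (simp add: ac_simps)
    then have "(d i * cnj (d j)) * (cnj (d i) * d j) = 1" using u that by simp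
    then show ?thesis using inverse_unique by (simp add: inverse_eq_divide)
  qed
  then show ?thesis unfolding unimodular_dyad_def using d1 d
    by (intro exI[of _ "\<lambda>i. cnj (d i)"]) (simp add: index_entry_inv[OF A])
qed

lemma positive_entry_inv_iff_unimodular_dyad:
  assumes A: "A \<in> carrier_mat n n" and n: "n \<ge> 1" and diag: "\<forall>i<n. A $$ (i,i) = 1"
  shows "((\<forall>i<n. \<forall>j<n. A $$ (i,j) \<noteq> 0) \<and> positive_mat A \<and> positive_mat (entry_inv A) \<and>
      (\<forall>i<n. A $$ (i,i) = 1) \<and> (\<forall>i<n. entry_inv A $$ (i,i) = 1)) \<longleftrightarrow> unimodular_dyad n A"
proof
  assume "unimodular_dyad n A"
  moreover from this have "\<forall>i<n. \<forall>j<n. A $$ (i,j) \<noteq> 0" using unimodular_dyadD(4)[OF A] by fastforce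
  ultimately show "(\<forall>i<n. \<forall>j<n. A $$ (i,j) \<noteq> 0) \<and> positive_mat A \<and> positive_mat (entry_inv A) \<and>
      (\<forall>i<n. A $$ (i,i) = 1) \<and> (\<forall>i<n. entry_inv A $$ (i,i) = 1)"
    using positive_mat_unimodular_dyad[OF A] diag index_entry_inv[OF A]
      positive_mat_unimodular_dyad[OF entry_inv_carrier[OF A] unimodular_dyad_entry_inv[OF A]] by simp
qed (use unimodular_dyad_if_positive_entry_inv[OF A n] in blast)

theorem theorem2p4:
  fixes A :: "complex mat" and n :: nat
  assumes n: "n \<ge> 1"
    and A: "A \<in> carrier_mat n n"
    and unital: "schur_prod A (1\<^sub>m n) = 1\<^sub>m n"
  shows
    "(((\<forall>B\<in>carrier_mat n n. \<forall>C\<in>carrier_mat n n. schur_prod A (B * C) = schur_prod A B * schur_prod A C) \<and>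
      (\<forall>B\<in>carrier_mat n n. schur_prod A (mat_adjoint B) = mat_adjoint (schur_prod A B)))
     \<longleftrightarrow> (completely_positive n (schur_prod A) \<and> algebra_iso n (schur_prod A))) \<and>
     ((completely_positive n (schur_prod A) \<and> algebra_iso n (schur_prod A))
     \<longleftrightarrow> (vec_space.rank n A = 1 \<and> A * mat_adjoint A = mat_adjoint A * A \<and>
          (\<forall>i<n. A $$ (i,i) = 1))) \<and>
     ((vec_space.rank n A = 1 \<and> A * mat_adjoint A = mat_adjoint A * A \<and>
          (\<forall>i<n. A $$ (i,i) = 1))
     \<longleftrightarrow> (vec_space.rank n A = 1 \<and>
          (\<forall>i<n. \<forall>j<n. cmod (A $$ (i,j)) = 1) \<and> (\<forall>i<n. A $$ (i,i) = 1))) \<and>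
     ((vec_space.rank n A = 1 \<and>
          (\<forall>i<n. \<forall>j<n. cmod (A $$ (i,j)) = 1) \<and> (\<forall>i<n. A $$ (i,i) = 1))
     \<longleftrightarrow> (mat_adjoint A = A \<and> spectrum A \<subseteq> {0, of_nat n} \<and>
          Polynomial.order 0 (char_poly A) = n - 1 \<and> schur_map_norm n A = 1)) \<and>
     ((mat_adjoint A = A \<and> spectrum A \<subseteq> {0, of_nat n} \<and>
          Polynomial.order 0 (char_poly A) = n - 1 \<and> schur_map_norm n A = 1)
     \<longleftrightarrow> ((\<forall>i<n. \<forall>j<n. A $$ (i,j) \<noteq> 0) \<and>
          positive_mat A \<and> positive_mat (entry_inv A) \<and>
          (\<forall>i<n. A $$ (i,i) = 1) \<and> (\<forall>i<n. entry_inv A $$ (i,i) = 1)))"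
proof -
  have diag: "\<forall>i<n. A $$ (i,i) = 1" using diag_eq_1_if_schur_prod_unital[OF A unital] by blast
  show ?thesis
    unfolding star_hom_iff_unimodular_dyad[OF A n diag] cp_algebra_iso_iff_unimodular_dyad[OF A n diag]
      rank_1_normal_iff_unimodular_dyad[OF A n] rank_1_unimodular_iff_unimodular_dyad[OF A n]
      spectral_iff_unimodular_dyad[OF A n diag] positive_entry_inv_iff_unimodular_dyad[OF A n diag]
    by simp
qed

end
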